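(* Consider the cascade model with $N=2$ processors, rates $\lambda_1,\lambda_2>0$ and $\beta_{12}>0$, started from a fixed initial state, and its embedded chain $Y(n)=x_2(\tau_n)-x_1(\tau_n)$. If $\lambda_1<\lambda_2$, then the Markov chain $Y(n)$ is ergodic and $x_1(t)/t\to\lambda_1$ and $x_2(t)/t\to\lambda_1$ in probability as $t\to\infty$. If $\lambda_1>\lambda_2$, then the Markov chain $Y(n)$ is transient and $x_1(t)/t\to\lambda_1$, $x_2(t)/t\to\lambda_2$ in probability as $t\to\infty$.
   Context: Cascade model with $N=2$: processes $x_1(t),x_2(t)\in\mathbb Z$; independent Poisson flows $\Pi^1,\Pi^2,\Pi^{12}$ of intensities $\lambda_1,\lambda_2,\beta_{12}$. At points of $\Pi^k$, $x_k$ increases by $1$; at points $\sigma$ of $\Pi^{12}$, processor $1$ sends a message with value $x_1(\sigma)$ to processor $2$, and if $x_2(\sigma)>x_1(\sigma)$ then $x_2$ is reset to $x_1(\sigma)$. Let $0=\tau_0<\tau_1<\dots$ be the successive points of the union of all three flows. With $Z=\lambda_1+\lambda_2+\beta_{12}$, the embedded chain $Y(n)$ on $\mathbb Z$ has transition probabilities $p_{i,i+1}=\lambda_2/Z$, $p_{i,i-1}=\lambda_1/Z$, $p_{i,0}=\beta_{12}/Z$ for $i>0$, $p_{i,i}=\beta_{12}/Z$ for $i\le 0$ (so $p_{0,0}=\beta_{12}/Z$), and all other transitions have probability $0$. *)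

theory Defs
  imports "HOL-Probability.Probability"
begin

fun traj :: "('s \<Rightarrow> 's pmf) \<Rightarrow> nat \<Rightarrow> 's \<Rightarrow> 's list pmf" where
  "traj K 0 i = return_pmf [i]"
| "traj K (Suc n) i = bind_pmf (K i) (\<lambda>j. map_pmf (\<lambda>xs. i # xs) (traj K n j))"

definition pstep :: "('s \<Rightarrow> 's pmf) \<Rightarrow> nat \<Rightarrow> 's \<Rightarrow> 's \<Rightarrow> real" where
  "pstep K n i j = measure_pmf.prob (traj K n i) {xs. last xs = j}"

definition return_by :: "('s \<Rightarrow> 's pmf) \<Rightarrow> nat \<Rightarrow> 's \<Rightarrow> real" where
  "return_by K n i = measure_pmf.prob (traj K n i) {xs. \<exists>k\<in>{1..n}. xs ! k = i}"

definition return_prob :: "('s \<Rightarrow> 's pmf) \<Rightarrow> 's \<Rightarrow> real" where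
  "return_prob K i = (SUP n. return_by K n i)"

definition recurrent_state :: "('s \<Rightarrow> 's pmf) \<Rightarrow> 's \<Rightarrow> bool" where
  "recurrent_state K i \<longleftrightarrow> return_prob K i = 1"

definition transient_state :: "('s \<Rightarrow> 's pmf) \<Rightarrow> 's \<Rightarrow> bool" where
  "transient_state K i \<longleftrightarrow> return_prob K i < 1"

text \<open>Positive recurrence: recurrent with finite mean return time
  E[T_i] = sum over n of P(T_i > n) = sum over n of (1 - P(T_i \<le> n)).\<close>
definition positive_recurrent_state :: "('s \<Rightarrow> 's pmf) \<Rightarrow> 's \<Rightarrow> bool" where
  "positive_recurrent_state K i \<longleftrightarrow>
     recurrent_state K i \<and> summable (\<lambda>n. 1 - return_by K n i)"

definition irreducible_chain :: "('s \<Rightarrow> 's pmf) \<Rightarrow> bool" where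
  "irreducible_chain K \<longleftrightarrow> (\<forall>i j. \<exists>n. pstep K n i j > 0)"

definition aperiodic_chain :: "('s \<Rightarrow> 's pmf) \<Rightarrow> bool" where
  "aperiodic_chain K \<longleftrightarrow> (\<forall>i. Gcd {n. n > 0 \<and> pstep K n i i > 0} = 1)"

definition ergodic_chain :: "('s \<Rightarrow> 's pmf) \<Rightarrow> bool" where
  "ergodic_chain K \<longleftrightarrow> irreducible_chain K \<and> aperiodic_chain K \<and>
                         (\<forall>i. positive_recurrent_state K i)"

definition transient_chain :: "('s \<Rightarrow> 's pmf) \<Rightarrow> bool" where
  "transient_chain K \<longleftrightarrow> (\<forall>i. transient_state K i)"

definition Y_trans :: "real \<Rightarrow> real \<Rightarrow> real \<Rightarrow> int \<Rightarrow> int \<Rightarrow> real" where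
  "Y_trans l1 l2 b i j =
     (let Z = l1 + l2 + b in
      (if j = i + 1 then l2 / Z else 0)
    + (if j = i - 1 then l1 / Z else 0)
    + (if i > 0 \<and> j = 0 then b / Z else 0)
    + (if i \<le> 0 \<and> j = i then b / Z else 0))"

definition Y_kernel :: "real \<Rightarrow> real \<Rightarrow> real \<Rightarrow> int \<Rightarrow> int pmf" where
  "Y_kernel l1 l2 b i = embed_pmf (Y_trans l1 l2 b i)"

text \<open>Flows are indexed 0 (= Pi^1), 1 (= Pi^2), 2 (= Pi^12).  Flow k is given by its
  i.i.d. exponential inter-arrival times G k 0, G k 1, ...; its n-th point (n = 0,1,...)
  is G k 0 + ... + G k n.\<close>
definition flow_rate :: "real \<Rightarrow> real \<Rightarrow> real \<Rightarrow> nat \<Rightarrow> real" where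
  "flow_rate l1 l2 b k = (if k = 0 then l1 else if k = 1 then l2 else b)"

definition flow_point :: "(nat \<Rightarrow> nat \<Rightarrow> real) \<Rightarrow> nat \<Rightarrow> nat \<Rightarrow> real" where
  "flow_point G k n = (\<Sum>m\<le>n. G k m)"

text \<open>All points (time, flow index) of the three flows in [0,t], in chronological order (simultaneous points, a null event, in unspecified order).\<close>
definition events_upto :: "(nat \<Rightarrow> nat \<Rightarrow> real) \<Rightarrow> real \<Rightarrow> (real \<times> nat) list" where
  "events_upto G t = sorted_key_list_of_set fst {(flow_point G k n, k) | k n. k < 3 \<and> flow_point G k n \<le> t}"

definition cascade_step :: "int \<times> int \<Rightarrow> nat \<Rightarrow> int \<times> int" where
  "cascade_step x k =
     (if k = 0 then (fst x + 1, snd x)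
      else if k = 1 then (fst x, snd x + 1)
      else (fst x, (if snd x > fst x then fst x else snd x)))"

definition cascade_state :: "int \<times> int \<Rightarrow> (nat \<Rightarrow> nat \<Rightarrow> real) \<Rightarrow> real \<Rightarrow> int \<times> int" where
  "cascade_state x0 G t = foldl (\<lambda>x e. cascade_step x (snd e)) x0 (events_upto G t)"

text \<open>Outer probability, so that no measurability of the events needs to be presupposed.\<close>
definition outer_prob :: "'a measure \<Rightarrow> 'a set \<Rightarrow> real" where
  "outer_prob M A = (INF B\<in>{B \<in> sets M. A \<inter> space M \<subseteq> B}. measure M B)"

definition conv_in_prob :: "'a measure \<Rightarrow> (real \<Rightarrow> 'a \<Rightarrow> real) \<Rightarrow> real \<Rightarrow> bool" where
  "conv_in_prob M X c \<longleftrightarrow>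
     (\<forall>\<epsilon>>0. ((\<lambda>t. outer_prob M {\<omega> \<in> space M. \<bar>X t \<omega> - c\<bar> > \<epsilon>}) \<longlongrightarrow> 0) at_top)"

end

(*
  Write Z = l1 + l2 + b.  The embedded chain Y = x2 - x1 is a walk on the integers that steps up
  with probability l2/Z, down with probability l1/Z, and jumps to min Y 0 with probability b/Z.
  For l1 < l2 every state is positive recurrent by Foster's criterion, with explicit Lyapunov
  functions: linear where the walk drifts towards the target, exponential where it has to move
  against its drift or climb without being reset.  For l1 > l2 a geometric function
  (l2/l1)^(distance below the target) is superharmonic, which makes every state transient.

  Pathwise, x1(t) is x1(0) plus the number of points of the first flow up to t, and x2(t) is the
  minimum of x2(0) + N2(t) and, over all messages sigma <= t, of x1(sigma) + N2(sigma, t], where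
  N2 counts the points of the second flow.  Chebyshev's inequality for the Erlang distributed
  arrival times, applied on a finite grid and interpolated by monotonicity, shows that with
  probability tending to 1 every count N(s) is within delta t of its mean, uniformly for s <= t.
  Hence x1(t)/t tends to l1, and x2(t)/t tends to min l1 l2: the lower bound holds for all
  messages, and the upper bound uses a message that arrives in the last eta t time units.
*)

theory Submission
  imports Defs
begin

section \<open>Hitting and return probabilities of Markov chains\<close>

lemma measure_pmf_prob_bind_pmf:
  "measure_pmf.prob (bind_pmf M N) X = measure_pmf.expectation M (\<lambda>x. measure_pmf.prob (N x) X)"
proof -
  have "ennreal (measure_pmf.prob (bind_pmf M N) X) = (\<integral>\<^sup>+x. ennreal (measure_pmf.prob (N x) X) \<partial>M)"
    by (simp add: measure_pmf.emeasure_eq_measure[symmetric])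
  also have "\<dots> = ennreal (measure_pmf.expectation M (\<lambda>x. measure_pmf.prob (N x) X))"
    by (rule nn_integral_eq_integral) (auto intro!: measure_pmf.integrable_const_bound[where B=1])
  finally show ?thesis by (simp add: integral_nonneg_AE)
qed

lemma sum_list_filter_fst_weighted:
  fixes f :: "'a \<Rightarrow> real"
  assumes "finite B" "fst ` set xs \<subseteq> B"
  shows "(\<Sum>a\<in>B. f a * sum_list (map snd (filter (\<lambda>z. fst z = a) xs)))
         = sum_list (map (\<lambda>z. snd z * f (fst z)) xs)"
  using assms(2)
proof (induction xs)
  case (Cons z xs)
  have "(\<Sum>a\<in>B. f a * sum_list (map snd (filter (\<lambda>z. fst z = a) (z # xs))))
      = (\<Sum>a\<in>B. if fst z = a then snd z * f (fst z) else 0)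
        + (\<Sum>a\<in>B. f a * sum_list (map snd (filter (\<lambda>z. fst z = a) xs)))"
    by (subst sum.distrib[symmetric], rule sum.cong) (auto simp: algebra_simps)
  also have "(\<Sum>a\<in>B. if fst z = a then snd z * f (fst z) else 0) = snd z * f (fst z)"
    using Cons.prems assms(1) by (simp add: sum.delta)
  finally show ?case using Cons by simp
qed simp

lemma expectation_pmf_of_list:
  fixes f :: "'a \<Rightarrow> real"
  assumes "pmf_of_list_wf xs"
  shows "measure_pmf.expectation (pmf_of_list xs) f = sum_list (map (\<lambda>z. snd z * f (fst z)) xs)"
proof -
  have "measure_pmf.expectation (pmf_of_list xs) f
      = (\<Sum>a\<in>set (map fst xs). f a * pmf (pmf_of_list xs) a)"
    using set_pmf_of_list[OF assms] by (intro integral_measure_pmf_real) auto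
  also have "\<dots> = sum_list (map (\<lambda>z. snd z * f (fst z)) xs)"
    unfolding pmf_pmf_of_list[OF assms] by (rule sum_list_filter_fst_weighted) auto
  finally show ?thesis .
qed

lemma length_set_pmf_traj: "xs \<in> set_pmf (traj K n i) \<Longrightarrow> length xs = Suc n"
  by (induction n arbitrary: i xs) auto

lemma prob_traj_Suc:
  "measure_pmf.prob (traj K (Suc n) i) A
   = measure_pmf.expectation (K i) (\<lambda>j. measure_pmf.prob (traj K n j) ((#) i -` A))"
  by (simp add: measure_pmf_prob_bind_pmf)

definition avoid_prob :: "('s \<Rightarrow> 's pmf) \<Rightarrow> nat \<Rightarrow> 's \<Rightarrow> 's \<Rightarrow> real" where
  "avoid_prob K n j i = measure_pmf.prob (traj K n j) {xs. i \<notin> set xs}"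

lemma avoid_prob_0: "avoid_prob K 0 j i = (if j = i then 0 else 1)"
  by (simp add: avoid_prob_def)

lemma avoid_prob_Suc:
  "avoid_prob K (Suc n) j i =
     (if j = i then 0 else measure_pmf.expectation (K j) (\<lambda>j'. avoid_prob K n j' i))"
proof -
  have "(#) j -` {xs. i \<notin> set xs} = (if j = i then {} else {xs. i \<notin> set xs})"
    by auto
  then show ?thesis
    unfolding avoid_prob_def prob_traj_Suc by simp
qed

lemma avoid_prob_self: "avoid_prob K n i i = 0"
  by (cases n) (simp_all add: avoid_prob_0 avoid_prob_Suc)

lemma avoid_prob_eq_nth:
  "avoid_prob K n j i = measure_pmf.prob (traj K n j) {xs. \<forall>k\<le>n. xs ! k \<noteq> i}"
proof -
  have "i \<notin> set xs \<longleftrightarrow> (\<forall>k\<le>n. xs ! k \<noteq> i)" if "xs \<in> set_pmf (traj K n j)" for xs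
    using length_set_pmf_traj[OF that] by (auto simp: in_set_conv_nth less_Suc_eq_le)
  then show ?thesis
    unfolding avoid_prob_def by (intro measure_prob_cong_0) (auto simp: set_pmf_eq)
qed

lemma return_by_0: "return_by K 0 i = 0"
  by (simp add: return_by_def)

lemma return_by_Suc:
  "return_by K (Suc n) i = 1 - measure_pmf.expectation (K i) (\<lambda>j. avoid_prob K n j i)"
proof -
  have "(#) i -` (- {xs. \<exists>k\<in>{1..Suc n}. xs ! k = i}) = {xs. \<forall>k\<le>n. xs ! k \<noteq> i}"
    by (auto simp: Bex_def)
  then have "measure_pmf.prob (traj K (Suc n) i) (- {xs. \<exists>k\<in>{1..Suc n}. xs ! k = i})
           = measure_pmf.expectation (K i) (\<lambda>j. avoid_prob K n j i)"
    unfolding prob_traj_Suc avoid_prob_eq_nth by simp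
  then show ?thesis
    using measure_pmf.prob_compl[of "{xs. \<exists>k\<in>{1..Suc n}. xs ! k = i}" "traj K (Suc n) i"]
    unfolding return_by_def Compl_eq_Diff_UNIV by simp
qed

lemma positive_recurrent_state_if_summable:
  assumes "summable (\<lambda>n. 1 - return_by K n i)"
  shows "positive_recurrent_state K i"
proof -
  have return_by_le: "return_by K n i \<le> 1" for n
    by (simp add: return_by_def)
  have "(\<lambda>n. 1 - return_by K n i) \<longlonglongrightarrow> 0"
    using assms by (rule summable_LIMSEQ_zero)
  then have "(\<lambda>n. 1 - (1 - return_by K n i)) \<longlonglongrightarrow> 1 - 0"
    by (intro tendsto_intros)
  then have "(\<lambda>n. return_by K n i) \<longlonglongrightarrow> 1"
    by simp
  then have "1 \<le> return_prob K i"
    unfolding return_prob_def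
    by (rule LIMSEQ_le_const2) (auto intro!: cSUP_upper bdd_aboveI2[where M=1] return_by_le)
  moreover have "return_prob K i \<le> 1"
    unfolding return_prob_def by (rule cSUP_least) (auto simp: return_by_le)
  ultimately show ?thesis
    unfolding positive_recurrent_state_def recurrent_state_def using assms by simp
qed

lemma sum_avoid_prob_le_lyapunov:
  fixes V :: "'s \<Rightarrow> real"
  assumes finite: "\<And>j. finite (set_pmf (K j))"
    and nonneg: "\<And>j. 0 \<le> V j"
    and drift: "\<And>j. j \<noteq> i \<Longrightarrow> 1 + measure_pmf.expectation (K j) V \<le> V j"
  shows "(\<Sum>m<n. avoid_prob K m j i) \<le> V j"
proof (induction n arbitrary: j)
  case (Suc n)
  have int: "integrable (measure_pmf (K j)) f" for f :: "'s \<Rightarrow> real"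
    by (rule integrable_measure_pmf_finite[OF finite])
  show ?case
  proof (cases "j = i")
    case False
    have "(\<Sum>m<Suc n. avoid_prob K m j i)
        = 1 + measure_pmf.expectation (K j) (\<lambda>j'. \<Sum>m<n. avoid_prob K m j' i)"
      using False by (subst sum.lessThan_Suc_shift)
        (simp add: avoid_prob_0 avoid_prob_Suc Bochner_Integration.integral_sum[OF int])
    also have "\<dots> \<le> 1 + measure_pmf.expectation (K j) V"
      using Suc.IH by (simp add: integral_mono[OF int int])
    finally show ?thesis using drift[OF False] by simp
  qed (simp add: avoid_prob_self nonneg)
qed (simp add: nonneg)

text \<open>The partial sums of \<open>1 - return_by K n i\<close> are truncated expected
  return times; by the previous lemma they are bounded by \<open>1\<close> plus the mean of \<open>V\<close>.\<close>
theorem positive_recurrent_state_if_drift: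
  fixes V :: "'s \<Rightarrow> real"
  assumes finite: "\<And>j. finite (set_pmf (K j))"
    and nonneg: "\<And>j. 0 \<le> V j"
    and drift: "\<And>j. j \<noteq> i \<Longrightarrow> 1 + measure_pmf.expectation (K j) V \<le> V j"
  shows "positive_recurrent_state K i"
proof -
  have int: "integrable (measure_pmf (K i)) f" for f :: "'s \<Rightarrow> real"
    by (rule integrable_measure_pmf_finite[OF finite])
  have "(\<Sum>m<n. 1 - return_by K m i) \<le> 1 + measure_pmf.expectation (K i) V" for n
  proof (cases n)
    case (Suc n')
    have "(\<Sum>m<n. 1 - return_by K m i)
        = 1 + measure_pmf.expectation (K i) (\<lambda>j. \<Sum>m<n'. avoid_prob K m j i)"
      unfolding Suc by (subst sum.lessThan_Suc_shift)
        (simp add: return_by_0 return_by_Suc Bochner_Integration.integral_sum[OF int])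
    also have "\<dots> \<le> 1 + measure_pmf.expectation (K i) V"
      using sum_avoid_prob_le_lyapunov[OF assms] by (simp add: integral_mono[OF int int])
    finally show ?thesis .
  qed (simp add: nonneg integral_nonneg_AE)
  then have "summable (\<lambda>n. 1 - return_by K n i)"
    by (intro summableI_nonneg_bounded) (auto simp: return_by_def)
  then show ?thesis
    by (rule positive_recurrent_state_if_summable)
qed

lemma hit_prob_le_superharmonic:
  fixes H :: "'s \<Rightarrow> real"
  assumes finite: "\<And>j. finite (set_pmf (K j))"
    and nonneg: "\<And>j. 0 \<le> H j" and at_i: "H i = 1"
    and superharmonic: "\<And>j. j \<noteq> i \<Longrightarrow> measure_pmf.expectation (K j) H \<le> H j"
  shows "1 - avoid_prob K n j i \<le> H j"
proof (induction n arbitrary: j)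
  case (Suc n)
  have int: "integrable (measure_pmf (K j)) f" for f :: "'s \<Rightarrow> real"
    by (rule integrable_measure_pmf_finite[OF finite])
  show ?case
  proof (cases "j = i")
    case False
    have "1 - avoid_prob K (Suc n) j i = measure_pmf.expectation (K j) (\<lambda>j'. 1 - avoid_prob K n j' i)"
      using False by (simp add: avoid_prob_Suc Bochner_Integration.integral_diff[OF int int])
    also have "\<dots> \<le> measure_pmf.expectation (K j) H"
      by (rule integral_mono[OF int int]) (rule Suc.IH)
    finally show ?thesis using superharmonic[OF False] by simp
  qed (simp add: avoid_prob_self at_i)
qed (simp add: avoid_prob_0 nonneg at_i)

text \<open>By the previous lemma \<open>H\<close> dominates the probability of reaching \<open>i\<close>, so its mean
  after one step bounds the return probability.\<close>
theorem transient_state_if_superharmonic: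
  fixes H :: "'s \<Rightarrow> real"
  assumes finite: "\<And>j. finite (set_pmf (K j))"
    and nonneg: "\<And>j. 0 \<le> H j" and at_i: "H i = 1"
    and superharmonic: "\<And>j. j \<noteq> i \<Longrightarrow> measure_pmf.expectation (K j) H \<le> H j"
    and mean_at_i: "measure_pmf.expectation (K i) H < 1"
  shows "transient_state K i"
proof -
  have int: "integrable (measure_pmf (K i)) f" for f :: "'s \<Rightarrow> real"
    by (rule integrable_measure_pmf_finite[OF finite])
  have "return_by K n i \<le> max 0 (measure_pmf.expectation (K i) H)" for n
  proof (cases n)
    case (Suc n')
    have "return_by K n i = measure_pmf.expectation (K i) (\<lambda>j. 1 - avoid_prob K n' j i)"
      by (simp add: Suc return_by_Suc Bochner_Integration.integral_diff[OF int int])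
    also have "\<dots> \<le> measure_pmf.expectation (K i) H"
      by (rule integral_mono[OF int int]) (rule hit_prob_le_superharmonic[OF finite nonneg at_i superharmonic])
    finally show ?thesis by simp
  qed (simp add: return_by_0)
  then have "return_prob K i \<le> max 0 (measure_pmf.expectation (K i) H)"
    unfolding return_prob_def by (intro cSUP_least) auto
  then show ?thesis
    unfolding transient_state_def using mean_at_i by simp
qed

definition reachable :: "('s \<Rightarrow> 's pmf) \<Rightarrow> nat \<Rightarrow> 's \<Rightarrow> 's \<Rightarrow> bool" where
  "reachable K n i j \<longleftrightarrow> (\<exists>xs\<in>set_pmf (traj K n i). last xs = j)"

lemma pstep_pos_if_reachable: "reachable K n i j \<Longrightarrow> 0 < pstep K n i j"
  unfolding reachable_def pstep_def by (auto intro: measure_pmf_posI)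

lemma reachable_0: "reachable K 0 i i"
  by (simp add: reachable_def)

lemma reachable_Suc:
  assumes "j \<in> set_pmf (K i)" "reachable K n j k"
  shows "reachable K (Suc n) i k"
proof -
  obtain xs where xs: "xs \<in> set_pmf (traj K n j)" "last xs = k"
    using assms(2) unfolding reachable_def by blast
  then have "xs \<noteq> []" using length_set_pmf_traj[OF xs(1)] by auto
  then show ?thesis
    unfolding reachable_def using assms(1) xs by (intro bexI[of _ "i # xs"]) auto
qed

lemma reachable_trans:
  assumes "reachable K m i j" "reachable K n j k"
  shows "reachable K (m + n) i k"
  using assms(1)
proof (induction m arbitrary: i)
  case (Suc m)
  then obtain j' ys where j': "j' \<in> set_pmf (K i)" "ys \<in> set_pmf (traj K m j')" "last (i # ys) = j"
    unfolding reachable_def by auto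
  have "ys \<noteq> []" using length_set_pmf_traj[OF j'(2)] by auto
  then have "reachable K m j' j" using j' unfolding reachable_def by auto
  then show ?case using reachable_Suc[OF j'(1) Suc.IH] by simp
qed (use assms(2) in \<open>simp add: reachable_def\<close>)

section \<open>The embedded chain as a random walk with resets\<close>

text \<open>For the embedded chain \<open>p\<close>, \<open>q\<close> and \<open>r\<close> are \<open>l2\<close>, \<open>l1\<close> and \<open>b\<close> divided by
  \<open>l1 + l2 + b\<close>.\<close>
locale reset_walk =
  fixes p q r :: real
  assumes p_pos: "0 < p" and q_pos: "0 < q" and r_pos: "0 < r" and p_q_r: "p + q + r = 1"
begin

lemma r_eq: "r = 1 - p - q"
  using p_q_r by simp

definition step_mean :: "(int \<Rightarrow> real) \<Rightarrow> int \<Rightarrow> real" where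
  "step_mean f j = q * f (j - 1) + p * f (j + 1) + r * f (min j 0)"

lemma step_mean_affine:
  assumes "j \<le> 0" "(p - q) * A = 1" "V (j - 1) = V j + A" "V (j + 1) = V j - A"
  shows "1 + step_mean V j = V j"
proof -
  have "step_mean V j = q * (V j + A) + p * (V j - A) + r * V j"
    unfolding step_mean_def assms(3,4) using assms(1) by (simp add: min_absorb1)
  also have "\<dots> = (p + q + r) * V j - (p - q) * A"
    by (simp add: algebra_simps)
  finally show ?thesis
    using assms(2) by (simp add: p_q_r)
qed

lemma step_mean_above_reset:
  assumes "0 < j" "V j = V 0 + 1 / r" "V (j + 1) = V 0 + 1 / r" "V (j - 1) \<le> V 0 + 1 / r"
  shows "1 + step_mean V j \<le> V j"
proof -
  have "q * V (j - 1) \<le> q * (V 0 + 1 / r)"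
    using assms(4) q_pos by (simp add: mult_left_mono)
  moreover have "q * (V 0 + 1 / r) + p * (V 0 + 1 / r) + r * V 0 + 1 = (p + q + r) * (V 0 + 1 / r)"
    using r_pos by (simp add: field_simps)
  ultimately show ?thesis
    using assms(1-3) by (simp add: step_mean_def min_absorb2 p_q_r)
qed

end

locale upward_reset_walk = reset_walk +
  assumes q_less_p: "q < p"
begin

lemma p_less_1: "p < 1"
  using p_q_r q_pos r_pos by linarith

definition climb_time :: real where
  "climb_time = 1 / (p - q)"

lemma climb_time_pos: "0 < climb_time"
  using q_less_p by (simp add: climb_time_def)

lemma climb_time_mult: "(p - q) * climb_time = 1"
  using q_less_p by (simp add: climb_time_def)

lemma p_climb_time: "p * climb_time = 1 + q * climb_time"
  using climb_time_mult by (simp add: algebra_simps)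

definition descent_ratio :: real where
  "descent_ratio = 2 * p / q"

definition descent_weight :: real where
  "descent_weight = 2 / p + 1 / r"

lemma descent_ratio_ge_2: "2 \<le> descent_ratio"
  using q_less_p q_pos by (simp add: descent_ratio_def field_simps)

lemma descent_ratio_mult_q: "descent_ratio * q = 2 * p"
  using q_pos by (simp add: descent_ratio_def)

lemma descent_drift:
  assumes "1 \<le> x"
  defines "\<theta> \<equiv> descent_ratio" and "G \<equiv> descent_weight"
  shows "1 + q * (G * (T - \<theta> * \<theta> * x)) + p * (G * (T - x)) + r * (G * (T - \<theta> * x))
           \<le> G * (T - \<theta> * x)"
proof -
  have "q * (\<theta> * \<theta>) + p + r * \<theta> - \<theta> - p * (\<theta> - 1) = (\<theta> - 1) * (\<theta> * q - 2 * p)"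
    unfolding r_eq by algebra
  then have key: "q * (\<theta> * \<theta>) + p + r * \<theta> - \<theta> = p * (\<theta> - 1)"
    using descent_ratio_mult_q by (simp add: \<theta>_def)
  have "2 \<le> G * p"
    using p_pos r_pos by (simp add: G_def descent_weight_def field_simps)
  then have "2 * 1 * 1 \<le> (G * p) * x * (\<theta> - 1)"
    using assms(1) descent_ratio_ge_2 by (intro mult_mono) (auto simp: \<theta>_def)
  moreover have "1 + q * (G * (T - \<theta> * \<theta> * x)) + p * (G * (T - x)) + r * (G * (T - \<theta> * x))
      - G * (T - \<theta> * x) = 1 + G * T * (p + q + r - 1) - G * x * (q * (\<theta> * \<theta>) + p + r * \<theta> - \<theta>)"
    by (simp add: algebra_simps)
  ultimately show ?thesis
    unfolding key p_q_r by (simp add: algebra_simps)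
qed

lemma descent_drift_at_0:
  defines "\<theta> \<equiv> descent_ratio" and "G \<equiv> descent_weight"
  shows "1 + q * (G * (T - \<theta>)) + p * (G * (T - 1) + 1 / r) + r * (G * (T - 1)) \<le> G * (T - 1)"
proof -
  have "1 + q * (G * (T - \<theta>)) + p * (G * (T - 1) + 1 / r) + r * (G * (T - 1)) - G * (T - 1)
      = G * (T - 1) * (p + q + r - 1) + 1 + p / r - G * (\<theta> * q - q)"
    by (simp add: algebra_simps)
  also have "\<dots> = 1 + p / r - G * (\<theta> * q - q)"
    by (simp add: p_q_r)
  also have "\<dots> = 1 + p / r - (2 / p + 1 / r) * (2 * p - q)"
    by (simp add: G_def \<theta>_def descent_ratio_mult_q descent_weight_def)
  also have "\<dots> = (q - p) / r - 3 + 2 * q / p"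
    using p_pos r_pos by (simp add: field_simps)
  also have "\<dots> \<le> 0"
  proof -
    have "(q - p) / r < 0" "2 * q / p < 2"
      using q_less_p p_pos r_pos by (simp_all add: divide_neg_pos pos_divide_less_eq)
    then show ?thesis by linarith
  qed
  finally show ?thesis by simp
qed

text \<open>An upper bound for the expected time to hit \<open>i \<le> 0\<close>: linear below \<open>i\<close>, where the walk
  drifts towards \<open>i\<close>; exponential between \<open>i\<close> and \<open>0\<close>, where it must move against its
  drift; above \<open>0\<close> it first waits, \<open>1 / r\<close> steps on average, for a reset to \<open>0\<close>.\<close>
definition lyapunov_nonpos :: "int \<Rightarrow> int \<Rightarrow> real" where
  "lyapunov_nonpos i j =
     (if j \<le> i then (i - j) * climb_time
      else if j \<le> 0 then descent_weight * (descent_ratio ^ nat (- i) - descent_ratio ^ nat (- j))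
      else descent_weight * (descent_ratio ^ nat (- i) - 1) + 1 / r)"

lemma lyapunov_nonpos_between:
  "i \<le> j \<Longrightarrow> j \<le> 0 \<Longrightarrow>
     lyapunov_nonpos i j = descent_weight * (descent_ratio ^ nat (- i) - descent_ratio ^ nat (- j))"
  by (cases "j = i") (auto simp: lyapunov_nonpos_def)

lemma lyapunov_nonpos_nonneg: "0 \<le> lyapunov_nonpos i j"
proof -
  have "descent_ratio ^ nat (- j) \<le> descent_ratio ^ nat (- i)" if "i < j"
    using that descent_ratio_ge_2 by (intro power_increasing) auto
  then show ?thesis
    using climb_time_pos p_pos r_pos descent_ratio_ge_2
    by (auto simp: lyapunov_nonpos_def descent_weight_def intro!: add_nonneg_nonneg mult_nonneg_nonneg)
qed

lemma lyapunov_nonpos_drift_below: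
  assumes "j < i" "i \<le> 0"
  shows "1 + step_mean (lyapunov_nonpos i) j = lyapunov_nonpos i j"
  using assms by (intro step_mean_affine[where A = climb_time])
    (auto simp: lyapunov_nonpos_def p_climb_time climb_time_mult algebra_simps)

lemma lyapunov_nonpos_drift_descent:
  assumes "i < j" "j < 0"
  shows "1 + step_mean (lyapunov_nonpos i) j \<le> lyapunov_nonpos i j"
proof -
  let ?T = "descent_ratio ^ nat (- i)"
  obtain w where w: "nat (- j) = Suc w"
    using assms(2) by (metis gr0_implies_Suc zero_less_nat_eq neg_0_less_iff_less)
  then have "nat (- (j - 1)) = Suc (Suc w)" "nat (- (j + 1)) = w"
    by auto
  then have "lyapunov_nonpos i (j - 1) = descent_weight * (?T - descent_ratio * descent_ratio * descent_ratio ^ w)"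
      "lyapunov_nonpos i (j + 1) = descent_weight * (?T - descent_ratio ^ w)"
      "lyapunov_nonpos i j = descent_weight * (?T - descent_ratio * descent_ratio ^ w)"
    using assms w by (auto simp: lyapunov_nonpos_between)
  moreover have "1 \<le> descent_ratio ^ w"
    using descent_ratio_ge_2 by simp
  ultimately show ?thesis
    using assms descent_drift[of "descent_ratio ^ w" ?T] by (simp add: step_mean_def)
qed

lemma lyapunov_nonpos_drift_at_0:
  assumes "i < 0"
  shows "1 + step_mean (lyapunov_nonpos i) 0 \<le> lyapunov_nonpos i 0"
proof -
  let ?T = "descent_ratio ^ nat (- i)"
  have "lyapunov_nonpos i (- 1) = descent_weight * (?T - descent_ratio)"
      "lyapunov_nonpos i 0 = descent_weight * (?T - 1)"
    using assms by (simp_all add: lyapunov_nonpos_between)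
  moreover have "lyapunov_nonpos i 1 = descent_weight * (?T - 1) + 1 / r"
    using assms by (simp add: lyapunov_nonpos_def)
  ultimately show ?thesis
    using descent_drift_at_0[of ?T] by (simp add: step_mean_def)
qed

lemma lyapunov_nonpos_drift_above:
  assumes "i \<le> 0" "0 < j"
  shows "1 + step_mean (lyapunov_nonpos i) j \<le> lyapunov_nonpos i j"
proof (rule step_mean_above_reset)
  let ?T = "descent_ratio ^ nat (- i)"
  have "lyapunov_nonpos i 0 = descent_weight * (?T - 1)"
    using assms(1) by (simp add: lyapunov_nonpos_between)
  then show "lyapunov_nonpos i j = lyapunov_nonpos i 0 + 1 / r"
    "lyapunov_nonpos i (j + 1) = lyapunov_nonpos i 0 + 1 / r"
    using assms by (auto simp: lyapunov_nonpos_def)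
  show "lyapunov_nonpos i (j - 1) \<le> lyapunov_nonpos i 0 + 1 / r"
    using assms r_pos by (cases "j = 1") (auto simp: lyapunov_nonpos_def)
qed (rule assms(2))

lemma lyapunov_nonpos_drift:
  assumes "i \<le> 0" "j \<noteq> i"
  shows "1 + step_mean (lyapunov_nonpos i) j \<le> lyapunov_nonpos i j"
proof -
  consider "j < i" | "i < j" "j < 0" | "j = 0" "i < 0" | "0 < j"
    using assms by linarith
  then show ?thesis
    using assms(1) lyapunov_nonpos_drift_below lyapunov_nonpos_drift_descent
      lyapunov_nonpos_drift_at_0 lyapunov_nonpos_drift_above
    by cases auto
qed

definition ascent_ratio :: real where
  "ascent_ratio = 2 / p"

lemma ascent_ratio_mult_p: "ascent_ratio * p = 2"
  using p_pos by (simp add: ascent_ratio_def)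

lemma ascent_ratio_ge_2: "2 \<le> ascent_ratio"
  using p_pos p_less_1 by (simp add: ascent_ratio_def field_simps)

definition ascent_cost :: "int \<Rightarrow> real" where
  "ascent_cost j = (1 + climb_time) * (ascent_ratio ^ nat j - 1)"

lemma ascent_cost_mono: "j \<le> k \<Longrightarrow> ascent_cost j \<le> ascent_cost k"
  unfolding ascent_cost_def using climb_time_pos ascent_ratio_ge_2
  by (intro mult_left_mono diff_right_mono power_increasing) auto

lemma ascent_drift:
  assumes "1 \<le> x"
  defines "g \<equiv> ascent_ratio" and "E \<equiv> 1 + climb_time"
  shows "1 + E * (g * x - 1) \<le> q * (E * (x - 1)) + p * (E * (g * g * x - 1))"
proof -
  have "q * (E * (x - 1)) + p * (E * (g * g * x - 1)) - E * (g * x - 1)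
      = E * (x * (q + (g * p) * g - g) + (1 - p - q))"
    by (simp add: algebra_simps)
  also have "\<dots> = E * (x * (q + g) + r)"
    using p_q_r by (simp add: g_def ascent_ratio_mult_p add.commute add_diff_eq[symmetric])
  also have "\<dots> \<ge> 1 * 2"
  proof (rule mult_mono)
    have "q + g \<le> x * (q + g)"
      using assms(1) ascent_ratio_ge_2 q_pos by (simp add: g_def mult_le_cancel_right1)
    then show "2 \<le> x * (q + g) + r"
      using ascent_ratio_ge_2 q_pos r_pos unfolding g_def by linarith
  qed (use climb_time_pos in \<open>auto simp: E_def\<close>)
  finally show ?thesis by simp
qed

lemma ascent_drift_at_0: "1 + q * climb_time \<le> p * ((1 + climb_time) * (ascent_ratio - 1))"
proof -
  have "1 + q * climb_time \<le> 1 + climb_time"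
    using climb_time_pos p_q_r p_pos r_pos by (simp add: mult_le_cancel_right1)
  also have "\<dots> \<le> (1 + climb_time) * (2 - p)"
    using climb_time_pos p_less_1 by (simp add: mult_le_cancel_left1)
  also have "\<dots> = p * ((1 + climb_time) * (ascent_ratio - 1))"
    using ascent_ratio_mult_p by (simp add: algebra_simps)
  finally show ?thesis .
qed

text \<open>For \<open>i > 0\<close> the walk has to climb from \<open>0\<close> to \<open>i\<close> before the next reset, which costs
  time exponential in \<open>i\<close>.\<close>
definition lyapunov_pos :: "int \<Rightarrow> int \<Rightarrow> real" where
  "lyapunov_pos i j =
     (if j \<le> 0 then ascent_cost i - j * climb_time
      else if j \<le> i then ascent_cost i - ascent_cost j
      else ascent_cost i + 1 / r)"

lemma lyapunov_pos_between: "0 \<le> j \<Longrightarrow> j \<le> i \<Longrightarrow> lyapunov_pos i j = ascent_cost i - ascent_cost j"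
  by (cases "j = 0") (auto simp: lyapunov_pos_def ascent_cost_def)

lemma lyapunov_pos_nonneg:
  assumes "0 < i"
  shows "0 \<le> lyapunov_pos i j"
proof -
  have "0 \<le> ascent_cost i"
    using ascent_cost_mono[of 0 i] assms by (simp add: ascent_cost_def)
  moreover have "0 \<le> - j * climb_time" if "j \<le> 0"
    using that climb_time_pos by (simp add: mult_nonpos_nonneg)
  ultimately show ?thesis
    using ascent_cost_mono[of j i] r_pos by (auto simp: lyapunov_pos_def)
qed

lemma lyapunov_pos_drift_below:
  assumes "j < 0"
  shows "1 + step_mean (lyapunov_pos i) j = lyapunov_pos i j"
  using assms by (intro step_mean_affine[where A = climb_time])
    (auto simp: lyapunov_pos_def p_climb_time climb_time_mult algebra_simps)

lemma lyapunov_pos_drift_at_0: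
  assumes "0 < i"
  shows "1 + step_mean (lyapunov_pos i) 0 \<le> lyapunov_pos i 0"
proof -
  let ?B = "ascent_cost i" and ?E = "1 + climb_time"
  have vals: "lyapunov_pos i (- 1) = ?B + climb_time" "lyapunov_pos i 1 = ?B - ?E * (ascent_ratio - 1)"
    "lyapunov_pos i 0 = ?B"
    using assms by (simp_all add: lyapunov_pos_def lyapunov_pos_between ascent_cost_def)
  have "step_mean (lyapunov_pos i) 0 = q * (?B + climb_time) + p * (?B - ?E * (ascent_ratio - 1)) + r * ?B"
    by (simp add: step_mean_def vals)
  also have "\<dots> = (p + q + r) * ?B + q * climb_time - p * (?E * (ascent_ratio - 1))"
    by (simp add: algebra_simps)
  finally show ?thesis
    using ascent_drift_at_0 p_q_r by (simp add: vals(3))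
qed

lemma lyapunov_pos_drift_ascent:
  assumes "0 < j" "j < i"
  shows "1 + step_mean (lyapunov_pos i) j \<le> lyapunov_pos i j"
proof -
  let ?B = "ascent_cost i" and ?E = "1 + climb_time" and ?g = ascent_ratio
  obtain w where w: "nat j = Suc w"
    using assms(1) by (metis gr0_implies_Suc zero_less_nat_eq)
  then have "nat (j - 1) = w" "nat (j + 1) = Suc (Suc w)"
    by auto
  then have vals: "lyapunov_pos i (j - 1) = ?B - ?E * (?g ^ w - 1)"
      "lyapunov_pos i (j + 1) = ?B - ?E * (?g * ?g * ?g ^ w - 1)"
      "lyapunov_pos i j = ?B - ?E * (?g * ?g ^ w - 1)"
      "lyapunov_pos i 0 = ?B"
    using assms w by (auto simp: lyapunov_pos_def lyapunov_pos_between ascent_cost_def)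
  have "step_mean (lyapunov_pos i) j = q * (?B - ?E * (?g ^ w - 1)) + p * (?B - ?E * (?g * ?g * ?g ^ w - 1)) + r * ?B"
    using assms(1) by (simp add: step_mean_def vals(1,2,4))
  also have "\<dots> = (p + q + r) * ?B - (q * (?E * (?g ^ w - 1)) + p * (?E * (?g * ?g * ?g ^ w - 1)))"
    by (simp add: algebra_simps)
  finally show ?thesis
    using ascent_drift[of "?g ^ w"] ascent_ratio_ge_2 p_q_r by (simp add: vals(3))
qed

lemma lyapunov_pos_drift_above:
  assumes "0 < i" "i < j"
  shows "1 + step_mean (lyapunov_pos i) j \<le> lyapunov_pos i j"
proof (rule step_mean_above_reset)
  have "0 \<le> ascent_cost i"
    using ascent_cost_mono[of 0 i] assms(1) by (simp add: ascent_cost_def)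
  moreover have "lyapunov_pos i 0 = ascent_cost i"
    "lyapunov_pos i (j - 1) = (if j - 1 = i then 0 else ascent_cost i + 1 / r)"
    using assms by (auto simp: lyapunov_pos_def)
  ultimately show "lyapunov_pos i j = lyapunov_pos i 0 + 1 / r"
    "lyapunov_pos i (j + 1) = lyapunov_pos i 0 + 1 / r"
    "lyapunov_pos i (j - 1) \<le> lyapunov_pos i 0 + 1 / r"
    using assms r_pos by (auto simp: lyapunov_pos_def)
qed (use assms in simp)

lemma lyapunov_pos_drift:
  assumes "0 < i" "j \<noteq> i"
  shows "1 + step_mean (lyapunov_pos i) j \<le> lyapunov_pos i j"
proof -
  consider "j < 0" | "j = 0" | "0 < j" "j < i" | "i < j"
    using assms by linarith
  then show ?thesis
    using assms(1) lyapunov_pos_drift_below lyapunov_pos_drift_at_0 lyapunov_pos_drift_ascent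
      lyapunov_pos_drift_above
    by cases auto
qed

lemma exists_lyapunov:
  "\<exists>V. (\<forall>j. 0 \<le> V j) \<and> (\<forall>j. j \<noteq> i \<longrightarrow> 1 + step_mean V j \<le> V j)"
proof (cases "i \<le> 0")
  case True
  then show ?thesis
    using lyapunov_nonpos_nonneg lyapunov_nonpos_drift by blast
next
  case False
  then show ?thesis
    using lyapunov_pos_nonneg lyapunov_pos_drift by (metis not_le)
qed

end

locale downward_reset_walk = reset_walk +
  assumes p_less_q: "p < q"
begin

text \<open>Climbing one level against the drift succeeds with probability \<open>p / q\<close> at most.\<close>
definition hit_bound :: "int \<Rightarrow> int \<Rightarrow> real" where
  "hit_bound i j = (p / q) ^ nat (min i 1 - j)"

lemma hit_bound_nonneg: "0 \<le> hit_bound i j"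
  using p_pos q_pos by (simp add: hit_bound_def)

lemma hit_bound_le_1: "hit_bound i j \<le> 1"
  using p_pos p_less_q by (simp add: hit_bound_def power_le_one)

lemma hit_bound_self: "hit_bound i i = 1"
  by (simp add: hit_bound_def)

lemma step_mean_hit_bound: "step_mean (hit_bound i) j \<le> hit_bound i j"
proof (cases "min i 1 \<le> j")
  case True
  have "step_mean (hit_bound i) j \<le> q * 1 + p * 1 + r * 1"
    unfolding step_mean_def using p_pos q_pos r_pos hit_bound_le_1
    by (intro add_mono mult_left_mono) auto
  then show ?thesis
    using True p_q_r by (simp add: hit_bound_def)
next
  case False
  define \<rho> where "\<rho> = p / q"
  obtain w where w: "nat (min i 1 - j) = Suc w"
    using False by (metis gr0_implies_Suc zero_less_nat_eq not_le diff_gt_0_iff_gt)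
  then have "nat (min i 1 - (j - 1)) = Suc (Suc w)" "nat (min i 1 - (j + 1)) = w"
    by auto
  then have "step_mean (hit_bound i) j = q * (\<rho> * \<rho> * \<rho> ^ w) + p * \<rho> ^ w + r * (\<rho> * \<rho> ^ w)"
    using False w by (simp add: step_mean_def hit_bound_def \<rho>_def min_absorb1)
  also have "\<dots> = (q * \<rho>) * (\<rho> * \<rho> ^ w) + p * \<rho> ^ w + (1 - p - q) * (\<rho> * \<rho> ^ w)"
    unfolding r_eq by (simp add: algebra_simps)
  also have "\<dots> = p * (\<rho> * \<rho> ^ w) + p * \<rho> ^ w + (1 - p - q) * (\<rho> * \<rho> ^ w)"
    using q_pos by (simp add: \<rho>_def)
  also have "\<dots> = \<rho> * \<rho> ^ w + p * \<rho> ^ w - (q * \<rho>) * \<rho> ^ w"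
    by (simp add: algebra_simps)
  also have "\<dots> = \<rho> * \<rho> ^ w"
    using q_pos by (simp add: \<rho>_def)
  finally show ?thesis
    using w by (simp add: hit_bound_def \<rho>_def)
qed

lemma step_mean_hit_bound_self: "step_mean (hit_bound i) i < 1"
proof (cases "i \<le> 0")
  case True
  then have "step_mean (hit_bound i) i = q * (p / q) + p + r"
    by (simp add: step_mean_def hit_bound_def min_absorb1)
  then show ?thesis
    using p_less_q q_pos p_q_r by simp
next
  case False
  have "q * hit_bound i (i - 1) \<le> q * 1"
    using hit_bound_le_1 q_pos by (intro mult_left_mono) auto
  moreover have "r * (p / q) < r * 1"
    using r_pos p_pos p_less_q by (intro mult_strict_left_mono) auto
  moreover have "step_mean (hit_bound i) i = q * hit_bound i (i - 1) + p + r * (p / q)"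
    using False by (simp add: step_mean_def hit_bound_def)
  ultimately show ?thesis
    using p_q_r by simp
qed

end

lemma Y_kernel_eq_pmf_of_list:
  "Y_kernel l1 l2 b i =
     pmf_of_list [(i - 1, l1 / (l1 + l2 + b)), (i + 1, l2 / (l1 + l2 + b)), (min i 0, b / (l1 + l2 + b))]"
  unfolding Y_kernel_def pmf_of_list_def
proof (intro arg_cong[where f = embed_pmf] ext)
  fix j
  show "Y_trans l1 l2 b i j = sum_list (map snd (filter (\<lambda>z. fst z = j)
    [(i - 1, l1 / (l1 + l2 + b)), (i + 1, l2 / (l1 + l2 + b)), (min i 0, b / (l1 + l2 + b))]))"
    by (cases "i > 0"; cases "j = i + 1"; cases "j = i - 1"; cases "j = 0"; cases "j = i")
      (simp_all add: Y_trans_def Let_def)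
qed

context
  fixes l1 l2 b :: real
  assumes l1: "0 < l1" and l2: "0 < l2" and b: "0 < b"
begin

lemma reset_walk_Y: "reset_walk (l2 / (l1 + l2 + b)) (l1 / (l1 + l2 + b)) (b / (l1 + l2 + b))"
  using l1 l2 b by unfold_locales (simp_all add: add_divide_distrib[symmetric])

lemma pmf_of_list_wf_Y:
  "pmf_of_list_wf [(i - 1, l1 / (l1 + l2 + b)), (i + 1, l2 / (l1 + l2 + b)), (min i 0, b / (l1 + l2 + b))]"
  using l1 l2 b by (intro pmf_of_list_wfI) (auto simp: add_divide_distrib[symmetric])

lemma set_pmf_Y_kernel: "set_pmf (Y_kernel l1 l2 b i) = {i - 1, i + 1, min i 0}"
  unfolding Y_kernel_eq_pmf_of_list using l1 l2 b
  by (subst set_pmf_of_list_eq[OF pmf_of_list_wf_Y]) auto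

lemma expectation_Y_kernel:
  "measure_pmf.expectation (Y_kernel l1 l2 b i) f
     = reset_walk.step_mean (l2 / (l1 + l2 + b)) (l1 / (l1 + l2 + b)) (b / (l1 + l2 + b)) f i"
  unfolding Y_kernel_eq_pmf_of_list expectation_pmf_of_list[OF pmf_of_list_wf_Y]
    reset_walk.step_mean_def[OF reset_walk_Y]
  by (simp add: mult.commute)

lemma reachable_Y_kernel_up: "reachable (Y_kernel l1 l2 b) m i (i + int m)"
  and reachable_Y_kernel_down: "reachable (Y_kernel l1 l2 b) m i (i - int m)"
proof (induction m)
  case (Suc m)
  have step: "reachable (Y_kernel l1 l2 b) (Suc 0) k j" if "j \<in> {k - 1, k + 1}" for j k
    by (rule reachable_Suc[OF _ reachable_0]) (use that in \<open>auto simp: set_pmf_Y_kernel\<close>)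
  { case 1 show ?case
      using reachable_trans[OF Suc.IH(1) step[of "i + int m + 1"]] by (simp add: algebra_simps) }
  { case 2 show ?case
      using reachable_trans[OF Suc.IH(2) step[of "i - int m - 1"]] by (simp add: algebra_simps) }
qed (simp_all add: reachable_0)

lemma irreducible_Y_kernel: "irreducible_chain (Y_kernel l1 l2 b)"
  unfolding irreducible_chain_def
proof (intro allI)
  fix i j :: int
  have "reachable (Y_kernel l1 l2 b) (nat (j - i)) i j \<or> reachable (Y_kernel l1 l2 b) (nat (i - j)) i j"
    using reachable_Y_kernel_up[of "nat (j - i)" i] reachable_Y_kernel_down[of "nat (i - j)" i]
    by (cases "i \<le> j") auto
  then show "\<exists>n. 0 < pstep (Y_kernel l1 l2 b) n i j"
    using pstep_pos_if_reachable by metis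
qed

lemma aperiodic_Y_kernel: "aperiodic_chain (Y_kernel l1 l2 b)"
  unfolding aperiodic_chain_def
proof (intro allI)
  fix i :: int
  define S where "S = {n. 0 < n \<and> 0 < pstep (Y_kernel l1 l2 b) n i i}"
  have loop: "reachable (Y_kernel l1 l2 b) (Suc 0) j j" if "j \<le> 0" for j
    by (rule reachable_Suc[OF _ reachable_0]) (use that in \<open>simp add: set_pmf_Y_kernel\<close>)
  have "Gcd S = 1"
  proof (cases "0 < i")
    case False
    then have "1 \<in> S"
      using loop[of i] by (auto simp: S_def intro: pstep_pos_if_reachable)
    then show ?thesis
      using Gcd_dvd[of 1 S] by simp
  next
    case True
    \<comment> \<open>Returns to \<open>i\<close> of lengths \<open>i + 1\<close> and \<open>i + 2\<close>: reset to \<open>0\<close>, possibly stay there once, climb.\<close>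
    have to_0: "reachable (Y_kernel l1 l2 b) (Suc 0) i 0"
      by (rule reachable_Suc[OF _ reachable_0]) (use True in \<open>simp add: set_pmf_Y_kernel\<close>)
    have from_0: "reachable (Y_kernel l1 l2 b) (nat i) 0 i"
      using reachable_Y_kernel_up[of "nat i" 0] True by simp
    have "reachable (Y_kernel l1 l2 b) (Suc 0 + nat i) i i"
      by (rule reachable_trans[OF to_0 from_0])
    moreover have "reachable (Y_kernel l1 l2 b) (Suc 0 + Suc 0 + nat i) i i"
      using reachable_trans[OF reachable_trans[OF to_0 loop[of 0, simplified]] from_0] by simp
    ultimately have "Suc (nat i) \<in> S" "Suc (Suc (nat i)) \<in> S"
      by (auto simp: S_def intro: pstep_pos_if_reachable)
    then have "Gcd S dvd Suc (Suc (nat i)) - Suc (nat i)"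
      by (intro dvd_diff_nat Gcd_dvd)
    then show ?thesis
      by simp
  qed
  then show "Gcd {n. 0 < n \<and> 0 < pstep (Y_kernel l1 l2 b) n i i} = 1"
    by (simp add: S_def)
qed

lemma positive_recurrent_Y_kernel:
  assumes "l1 < l2"
  shows "positive_recurrent_state (Y_kernel l1 l2 b) i"
proof -
  interpret upward_reset_walk "l2 / (l1 + l2 + b)" "l1 / (l1 + l2 + b)" "b / (l1 + l2 + b)"
    using reset_walk_Y assms l1 l2 b
    by (simp add: upward_reset_walk_def upward_reset_walk_axioms_def divide_strict_right_mono)
  obtain V where "\<forall>j. 0 \<le> V j" "\<forall>j. j \<noteq> i \<longrightarrow> 1 + step_mean V j \<le> V j"
    using exists_lyapunov by blast
  then show ?thesis
    by (intro positive_recurrent_state_if_drift[where V = V])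
      (simp_all add: set_pmf_Y_kernel expectation_Y_kernel)
qed

lemma transient_Y_kernel:
  assumes "l2 < l1"
  shows "transient_state (Y_kernel l1 l2 b) i"
proof -
  interpret downward_reset_walk "l2 / (l1 + l2 + b)" "l1 / (l1 + l2 + b)" "b / (l1 + l2 + b)"
    using reset_walk_Y assms l1 l2 b
    by (simp add: downward_reset_walk_def downward_reset_walk_axioms_def divide_strict_right_mono)
  show ?thesis
    by (rule transient_state_if_superharmonic[where H = "hit_bound i"])
      (simp_all add: set_pmf_Y_kernel expectation_Y_kernel hit_bound_nonneg hit_bound_self
        step_mean_hit_bound step_mean_hit_bound_self)
qed

lemma ergodic_Y_kernel:
  assumes "l1 < l2"
  shows "ergodic_chain (Y_kernel l1 l2 b)"
  unfolding ergodic_chain_def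
  by (intro conjI allI irreducible_Y_kernel aperiodic_Y_kernel positive_recurrent_Y_kernel[OF assms])

lemma transient_chain_Y_kernel:
  assumes "l2 < l1"
  shows "transient_chain (Y_kernel l1 l2 b)"
  unfolding transient_chain_def by (intro allI transient_Y_kernel[OF assms])

end

section \<open>Pathwise dynamics of the cascade\<close>

lemma fst_foldl_cascade_step: "fst (foldl cascade_step x ks) = fst x + int (count_list ks 0)"
  by (induction ks arbitrary: x) (auto simp: cascade_step_def)

lemma snd_foldl_cascade_step_le: "snd (foldl cascade_step x ks) \<le> snd x + int (count_list ks 1)"
proof (induction ks arbitrary: x)
  case (Cons k ks)
  have "snd (cascade_step x k) \<le> snd x + (if k = 1 then 1 else 0)"
    by (auto simp: cascade_step_def)
  then show ?case
    using Cons[of "cascade_step x k"] by (simp split: if_splits)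
qed simp

lemma snd_foldl_cascade_step_le_reset:
  assumes "m < length ks" "ks ! m \<notin> {0, 1}"
  shows "snd (foldl cascade_step x ks)
           \<le> fst x + int (count_list (take m ks) 0) + int (count_list (drop (Suc m) ks) 1)"
proof -
  define y where "y = cascade_step (foldl cascade_step x (take m ks)) (ks ! m)"
  have "ks = take m ks @ ks ! m # drop (Suc m) ks"
    using assms(1) by (simp add: id_take_nth_drop)
  then have "foldl cascade_step x ks = foldl cascade_step y (drop (Suc m) ks)"
    by (metis foldl_Cons foldl_append y_def)
  moreover have "snd y \<le> fst x + int (count_list (take m ks) 0)"
    using assms(2) by (simp add: y_def cascade_step_def fst_foldl_cascade_step)
  ultimately show ?thesis
    using snd_foldl_cascade_step_le[of y "drop (Suc m) ks"] by simp
qed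

text \<open>Together with the two previous lemmas: \<open>x\<^sub>2\<close> ends as the minimum of its unreset value
  and of the values accumulated since each reset.\<close>
lemma snd_foldl_cascade_step_ge:
  assumes "v \<le> snd x + int (count_list ks 1)"
    and "\<And>m. m < length ks \<Longrightarrow> ks ! m \<notin> {0, 1} \<Longrightarrow>
           v \<le> fst x + int (count_list (take m ks) 0) + int (count_list (drop (Suc m) ks) 1)"
  shows "v \<le> snd (foldl cascade_step x ks)"
  using assms
proof (induction ks arbitrary: x)
  case (Cons k ks)
  have "v \<le> snd (cascade_step x k) + int (count_list ks 1)"
    using Cons.prems(1) Cons.prems(2)[of 0] by (auto simp: cascade_step_def)
  moreover have "v \<le> fst (cascade_step x k) + int (count_list (take m ks) 0)
      + int (count_list (drop (Suc m) ks) 1)" if "m < length ks" "ks ! m \<notin> {0, 1}" for m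
    using Cons.prems(2)[of "Suc m"] that by (auto simp: cascade_step_def)
  ultimately show ?case
    using Cons.IH by simp
qed simp

lemma (in linorder) sorted_key_list_of_set_inj_on:
  assumes "inj_on f A" "finite A"
  shows "set (sorted_key_list_of_set f A) = A" "sorted_wrt (<) (map f (sorted_key_list_of_set f A))"
proof -
  interpret folding_insort_key "(\<le>)" "(<)" A f
    by standard (rule assms(1))
  show "set (sorted_key_list_of_set f A) = A"
    using assms(2) by simp
  show "sorted_wrt (<) (map f (sorted_key_list_of_set f A))"
    by simp
qed

lemma take_drop_eq_filter_if_sorted_wrt:
  fixes f :: "'a \<Rightarrow> 'b::linorder"
  assumes "sorted_wrt (<) (map f xs)" "m < length xs"
  shows "take m xs = filter (\<lambda>x. f x < f (xs ! m)) xs"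
    and "drop (Suc m) xs = filter (\<lambda>x. f (xs ! m) < f x) xs"
proof -
  have xs: "xs = take m xs @ xs ! m # drop (Suc m) xs"
    using assms(2) by (simp add: id_take_nth_drop)
  then have "sorted_wrt (\<lambda>x y. f x < f y) (take m xs @ xs ! m # drop (Suc m) xs)"
    using assms(1) by (simp add: sorted_wrt_map)
  then have before: "\<forall>x\<in>set (take m xs). f x < f (xs ! m)"
    and after: "\<forall>y\<in>set (drop (Suc m) xs). f (xs ! m) < f y"
    by (auto simp: sorted_wrt_append)
  have split: "filter P xs = filter P (take m xs) @ filter P (xs ! m # drop (Suc m) xs)" for P
    by (metis xs filter_append)
  show "take m xs = filter (\<lambda>x. f x < f (xs ! m)) xs"
    using before after by (subst split) (auto simp: filter_id_conv filter_empty_conv)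
  show "drop (Suc m) xs = filter (\<lambda>x. f (xs ! m) < f x) xs"
    using before after by (subst split) (auto simp: filter_id_conv filter_empty_conv)
qed

lemma count_list_map_filter:
  "distinct xs \<Longrightarrow> count_list (map f (filter P xs)) k = card {x \<in> set xs. P x \<and> f x = k}"
  by (simp add: count_list_eq_length_filter filter_map filter_filter distinct_length_filter
      Int_def conj_commute eq_commute)

lemma card_between:
  fixes f :: "nat \<Rightarrow> real"
  assumes "finite {n. f n \<le> t}" "\<sigma> \<le> t"
  shows "int (card {n. \<sigma> < f n \<and> f n \<le> t}) = int (card {n. f n \<le> t}) - int (card {n. f n \<le> \<sigma>})"
proof -
  have "{n. \<sigma> < f n \<and> f n \<le> t} = {n. f n \<le> t} - {n. f n \<le> \<sigma>}" "{n. f n \<le> \<sigma>} \<subseteq> {n. f n \<le> t}"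
    using assms(2) by auto
  then show ?thesis
    using assms(1) by (simp add: card_Diff_subset finite_subset card_mono of_nat_diff)
qed

lemma cascade_state_eq_foldl: "cascade_state x0 g t = foldl cascade_step x0 (map snd (events_upto g t))"
  by (simp add: cascade_state_def foldl_map)

text \<open>Holds almost surely; it makes the time order of \<open>events_upto\<close> unambiguous.\<close>
definition simple_flows :: "(nat \<Rightarrow> nat \<Rightarrow> real) \<Rightarrow> bool" where
  "simple_flows g \<longleftrightarrow> (\<forall>k<3. \<forall>n. 0 < g k n) \<and>
     (\<forall>k<3. \<forall>k'<3. \<forall>n n'. k \<noteq> k' \<longrightarrow> flow_point g k n \<noteq> flow_point g k' n')"

definition flow_count :: "(nat \<Rightarrow> nat \<Rightarrow> real) \<Rightarrow> nat \<Rightarrow> real \<Rightarrow> nat" where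
  "flow_count g k s = card {n. flow_point g k n \<le> s}"

definition event_set :: "(nat \<Rightarrow> nat \<Rightarrow> real) \<Rightarrow> real \<Rightarrow> (real \<times> nat) set" where
  "event_set g t = {(flow_point g k n, k) | k n. k < 3 \<and> flow_point g k n \<le> t}"

lemma strict_mono_flow_point: "simple_flows g \<Longrightarrow> k < 3 \<Longrightarrow> strict_mono (flow_point g k)"
  by (rule strict_mono_Suc_iff[THEN iffD2]) (auto simp: flow_point_def simple_flows_def)

lemma flow_point_pos: "simple_flows g \<Longrightarrow> k < 3 \<Longrightarrow> 0 < flow_point g k n"
  unfolding flow_point_def simple_flows_def by (intro sum_pos) auto

lemma flow_count_mono:
  "s \<le> s' \<Longrightarrow> finite {n. flow_point g k n \<le> s'} \<Longrightarrow> flow_count g k s \<le> flow_count g k s'"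
  unfolding flow_count_def by (rule card_mono) auto

lemma flow_count_le_if_less_flow_point:
  assumes "simple_flows g" "k < 3" "s < flow_point g k m"
  shows "finite {n. flow_point g k n \<le> s}" "flow_count g k s \<le> m"
proof -
  have "n < m" if "flow_point g k n \<le> s" for n
  proof (rule ccontr)
    assume "\<not> n < m"
    then have "flow_point g k m \<le> flow_point g k n"
      using strict_mono_less_eq[OF strict_mono_flow_point[OF assms(1,2)]] by simp
    with that assms(3) show False
      by simp
  qed
  then have sub: "{n. flow_point g k n \<le> s} \<subseteq> {..<m}"
    by blast
  then show "finite {n. flow_point g k n \<le> s}"
    by (rule finite_subset) simp
  show "flow_count g k s \<le> m"
    unfolding flow_count_def using card_mono[OF finite_lessThan sub] by simp
qed

lemma flow_count_ge_if_flow_point_le: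
  assumes "simple_flows g" "k < 3" "flow_point g k m \<le> s" "finite {n. flow_point g k n \<le> s}"
  shows "Suc m \<le> flow_count g k s"
proof -
  have "flow_point g k n \<le> s" if "n \<le> m" for n
  proof -
    have "flow_point g k n \<le> flow_point g k m"
      using that strict_mono_less_eq[OF strict_mono_flow_point[OF assms(1,2)]] by simp
    then show ?thesis
      using assms(3) by linarith
  qed
  then have "{..m} \<subseteq> {n. flow_point g k n \<le> s}"
    by blast
  from card_mono[OF assms(4) this] show ?thesis
    by (simp add: flow_count_def)
qed

lemma card_event_set_flow:
  assumes "simple_flows g" "k < 3" "\<And>\<tau>. Q \<tau> \<Longrightarrow> \<tau> \<le> t"
  shows "card {e \<in> event_set g t. Q (fst e) \<and> snd e = k} = card {n. Q (flow_point g k n)}"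
proof -
  have "{e \<in> event_set g t. Q (fst e) \<and> snd e = k} = (\<lambda>n. (flow_point g k n, k)) ` {n. Q (flow_point g k n)}"
    using assms(2,3) by (auto simp: event_set_def)
  moreover have "inj (\<lambda>n. (flow_point g k n, k))"
    using strict_mono_imp_inj_on[OF strict_mono_flow_point[OF assms(1,2)]] by (auto simp: inj_def)
  ultimately show ?thesis
    by (simp add: card_image inj_on_subset)
qed

context
  fixes g :: "nat \<Rightarrow> nat \<Rightarrow> real" and t :: real
  assumes simple: "simple_flows g" and finite: "\<forall>k<3. finite {n. flow_point g k n \<le> t}"
begin

lemma events_upto:
  "set (events_upto g t) = event_set g t" "sorted_wrt (<) (map fst (events_upto g t))"
proof -
  have "inj_on fst (event_set g t)"
    using simple by (fastforce simp: inj_on_def event_set_def simple_flows_def)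
  moreover have "event_set g t = (\<Union>k<3. (\<lambda>n. (flow_point g k n, k)) ` {n. flow_point g k n \<le> t})"
    by (auto simp: event_set_def)
  then have "finite (event_set g t)"
    using finite by simp
  ultimately show "set (events_upto g t) = event_set g t" "sorted_wrt (<) (map fst (events_upto g t))"
    unfolding events_upto_def event_set_def[symmetric] by (simp_all add: sorted_key_list_of_set_inj_on)
qed

lemma distinct_events_upto: "distinct (events_upto g t)"
  using events_upto(2) by (simp add: strict_sorted_iff distinct_map)

lemma count_events_upto:
  assumes "k < 3"
  shows "count_list (map snd (events_upto g t)) k = flow_count g k t"
proof -
  have "{e \<in> event_set g t. snd e = k} = {e \<in> event_set g t. fst e \<le> t \<and> snd e = k}"
    by (auto simp: event_set_def)
  then show ?thesis
    using count_list_map_filter[OF distinct_events_upto, of snd "\<lambda>_. True" k]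
      card_event_set_flow[OF simple assms, of "\<lambda>\<tau>. \<tau> \<le> t" t]
    by (simp add: events_upto(1) flow_count_def)
qed

lemma counts_around_reset:
  assumes "m < length (events_upto g t)" "snd (events_upto g t ! m) = 2" "k < 2"
  defines "\<sigma> \<equiv> fst (events_upto g t ! m)"
  shows "count_list (map snd (take m (events_upto g t))) k = flow_count g k \<sigma>"
    and "int (count_list (map snd (drop (Suc m) (events_upto g t))) k)
           = int (flow_count g k t) - int (flow_count g k \<sigma>)"
proof -
  have "events_upto g t ! m \<in> event_set g t"
    using assms(1) events_upto(1) nth_mem by metis
  then obtain n where n: "\<sigma> = flow_point g 2 n" "\<sigma> \<le> t"
    using assms(2) unfolding \<sigma>_def event_set_def by auto
  then have no_tie: "flow_point g k n' \<noteq> \<sigma>" for n'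
    using simple assms(3) by (auto simp: simple_flows_def)
  have in_range: "{e \<in> event_set g t. P (fst e) \<and> snd e = k}
      = {e \<in> event_set g t. (P (fst e) \<and> fst e \<le> t) \<and> snd e = k}" for P
    by (auto simp: event_set_def)
  have "count_list (map snd (take m (events_upto g t))) k = card {n. flow_point g k n < \<sigma>}"
    unfolding take_drop_eq_filter_if_sorted_wrt(1)[OF events_upto(2) assms(1)]
    using card_event_set_flow[OF simple, of k "\<lambda>\<tau>. \<tau> < \<sigma>" t] assms(3) n(2)
    by (simp add: count_list_map_filter[OF distinct_events_upto] events_upto(1) \<sigma>_def)
  also have "{n. flow_point g k n < \<sigma>} = {n. flow_point g k n \<le> \<sigma>}"
    using no_tie by (auto simp: order_le_less)
  finally show "count_list (map snd (take m (events_upto g t))) k = flow_count g k \<sigma>"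
    by (simp add: flow_count_def)
  have "count_list (map snd (drop (Suc m) (events_upto g t))) k
      = card {n. \<sigma> < flow_point g k n \<and> flow_point g k n \<le> t}"
    unfolding take_drop_eq_filter_if_sorted_wrt(2)[OF events_upto(2) assms(1)]
    using card_event_set_flow[OF simple, of k "\<lambda>\<tau>. \<sigma> < \<tau> \<and> \<tau> \<le> t" t] assms(3)
    by (simp add: count_list_map_filter[OF distinct_events_upto] events_upto(1) \<sigma>_def in_range)
  then show "int (count_list (map snd (drop (Suc m) (events_upto g t))) k)
      = int (flow_count g k t) - int (flow_count g k \<sigma>)"
    using card_between[of "flow_point g k" t \<sigma>] finite assms(3) n(2) by (simp add: flow_count_def)
qed

lemma fst_cascade_state: "fst (cascade_state x0 g t) = fst x0 + int (flow_count g 0 t)"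
  by (simp add: cascade_state_eq_foldl fst_foldl_cascade_step count_events_upto)

lemma snd_cascade_state_le: "snd (cascade_state x0 g t) \<le> snd x0 + int (flow_count g 1 t)"
  using snd_foldl_cascade_step_le[of x0 "map snd (events_upto g t)"] count_events_upto[of 1]
  by (simp add: cascade_state_eq_foldl)

lemma snd_cascade_state_le_reset:
  assumes "flow_point g 2 n \<le> t"
  defines "\<sigma> \<equiv> flow_point g 2 n"
  shows "snd (cascade_state x0 g t)
           \<le> fst x0 + int (flow_count g 0 \<sigma>) + (int (flow_count g 1 t) - int (flow_count g 1 \<sigma>))"
proof -
  have "(\<sigma>, 2) \<in> set (events_upto g t)"
    using assms by (auto simp: events_upto(1) event_set_def)
  then obtain m where m: "m < length (events_upto g t)" "events_upto g t ! m = (\<sigma>, 2)"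
    by (auto simp: in_set_conv_nth)
  moreover have "count_list (map snd (take m (events_upto g t))) 0 = flow_count g 0 \<sigma>"
    "int (count_list (map snd (drop (Suc m) (events_upto g t))) 1)
       = int (flow_count g 1 t) - int (flow_count g 1 \<sigma>)"
    using counts_around_reset[OF m(1)] m(2) by simp_all
  ultimately show ?thesis
    using snd_foldl_cascade_step_le_reset[of m "map snd (events_upto g t)" x0]
    by (simp add: cascade_state_eq_foldl take_map drop_map)
qed

lemma snd_cascade_state_ge:
  assumes "v \<le> snd x0 + int (flow_count g 1 t)"
    and "\<And>n. flow_point g 2 n \<le> t \<Longrightarrow>
           v \<le> fst x0 + int (flow_count g 0 (flow_point g 2 n))
                + (int (flow_count g 1 t) - int (flow_count g 1 (flow_point g 2 n)))"
  shows "v \<le> snd (cascade_state x0 g t)"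
  unfolding cascade_state_eq_foldl
proof (rule snd_foldl_cascade_step_ge)
  show "v \<le> snd x0 + int (count_list (map snd (events_upto g t)) 1)"
    using assms(1) by (simp add: count_events_upto)
next
  fix m assume m: "m < length (map snd (events_upto g t))" "map snd (events_upto g t) ! m \<notin> {0, 1}"
  have "events_upto g t ! m \<in> event_set g t"
    using m(1) events_upto(1) nth_mem by (metis length_map)
  then obtain k n where n: "events_upto g t ! m = (flow_point g k n, k)" "k < 3" "flow_point g k n \<le> t"
    by (auto simp: event_set_def)
  moreover have "k = 2"
    using m n(1,2) by simp
  ultimately have reset: "events_upto g t ! m = (flow_point g 2 n, 2)" "flow_point g 2 n \<le> t"
    by auto
  have "count_list (map snd (take m (events_upto g t))) 0 = flow_count g 0 (flow_point g 2 n)"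
    "int (count_list (map snd (drop (Suc m) (events_upto g t))) 1)
       = int (flow_count g 1 t) - int (flow_count g 1 (flow_point g 2 n))"
    using counts_around_reset[of m] m(1) reset(1) by simp_all
  then show "v \<le> fst x0 + int (count_list (take m (map snd (events_upto g t))) 0)
      + int (count_list (drop (Suc m) (map snd (events_upto g t))) 1)"
    using assms(2)[OF reset(2)] by (simp add: take_map drop_map)
qed

end

definition counts_close :: "real \<Rightarrow> real \<Rightarrow> real \<Rightarrow> (nat \<Rightarrow> nat \<Rightarrow> real) \<Rightarrow> real \<Rightarrow> real \<Rightarrow> bool" where
  "counts_close l1 l2 b g t \<delta> \<longleftrightarrow> (\<forall>k<3. finite {n. flow_point g k n \<le> t} \<and>
     (\<forall>s\<in>{0..t}. \<bar>real (flow_count g k s) - flow_rate l1 l2 b k * s\<bar> \<le> \<delta> * t))"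

context
  fixes l1 l2 b :: real and g :: "nat \<Rightarrow> nat \<Rightarrow> real" and t \<delta> :: real
  assumes l1: "0 < l1" and l2: "0 < l2" and b: "0 < b"
    and simple: "simple_flows g" and close: "counts_close l1 l2 b g t \<delta>"
begin

lemma finite_flows: "\<forall>k<3. finite {n. flow_point g k n \<le> t}"
  using close by (simp add: counts_close_def)

lemma count_close:
  assumes "k < 3" "0 \<le> s" "s \<le> t"
  shows "\<bar>real (flow_count g k s) - flow_rate l1 l2 b k * s\<bar> \<le> \<delta> * t"
  using close assms by (simp add: counts_close_def)

lemma fst_cascade_state_close:
  assumes "0 \<le> t"
  shows "\<bar>real_of_int (fst (cascade_state x0 g t)) - l1 * t\<bar> \<le> \<bar>real_of_int (fst x0)\<bar> + \<delta> * t"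
proof -
  have "\<bar>real (flow_count g 0 t) - l1 * t\<bar> \<le> \<delta> * t"
    using count_close[of 0 t] assms by (simp add: flow_rate_def)
  then show ?thesis
    using abs_triangle_ineq[of "real_of_int (fst x0)" "real (flow_count g 0 t) - l1 * t"]
    by (simp add: fst_cascade_state[OF simple finite_flows] add_diff_eq)
qed

lemma snd_cascade_state_lower:
  assumes "0 \<le> t"
  shows "min l1 l2 * t - (\<bar>real_of_int (fst x0)\<bar> + \<bar>real_of_int (snd x0)\<bar>) - 3 * \<delta> * t
           \<le> snd (cascade_state x0 g t)"
proof -
  define v where "v = min l1 l2 * t - (\<bar>real_of_int (fst x0)\<bar> + \<bar>real_of_int (snd x0)\<bar>) - 3 * \<delta> * t"
  have N1: "l2 * t - \<delta> * t \<le> real (flow_count g 1 t)"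
    using count_close[of 1 t] assms by (simp add: flow_rate_def abs_le_iff)
  have "\<lceil>v\<rceil> \<le> snd (cascade_state x0 g t)"
  proof (rule snd_cascade_state_ge[OF simple finite_flows])
    have "0 \<le> \<delta> * t"
      using count_close[of 0 0] assms by simp
    moreover have "min l1 l2 * t \<le> l2 * t"
      using assms by (simp add: mult_right_mono)
    ultimately have "v \<le> snd x0 + real (flow_count g 1 t)"
      using N1 by (simp add: v_def)
    then show "\<lceil>v\<rceil> \<le> snd x0 + int (flow_count g 1 t)"
      by (simp add: ceiling_le_iff)
  next
    fix n assume n: "flow_point g 2 n \<le> t"
    define \<sigma> where "\<sigma> = flow_point g 2 n"
    have \<sigma>: "0 \<le> \<sigma>" "\<sigma> \<le> t"
      using flow_point_pos[OF simple, of 2 n] n by (simp_all add: \<sigma>_def)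
    have "min l1 l2 * \<sigma> \<le> l1 * \<sigma>" "min l1 l2 * (t - \<sigma>) \<le> l2 * (t - \<sigma>)"
      using \<sigma> by (simp_all add: mult_right_mono)
    moreover have "min l1 l2 * t = min l1 l2 * \<sigma> + min l1 l2 * (t - \<sigma>)" "l2 * (t - \<sigma>) = l2 * t - l2 * \<sigma>"
      by (simp_all add: algebra_simps)
    moreover have "l1 * \<sigma> - \<delta> * t \<le> real (flow_count g 0 \<sigma>)" "real (flow_count g 1 \<sigma>) \<le> l2 * \<sigma> + \<delta> * t"
      using count_close[of 0 \<sigma>] count_close[of 1 \<sigma>] \<sigma> by (simp_all add: flow_rate_def abs_le_iff)
    ultimately have "v \<le> fst x0 + real (flow_count g 0 \<sigma>) + (real (flow_count g 1 t) - real (flow_count g 1 \<sigma>))"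
      using N1 unfolding v_def by linarith
    then show "\<lceil>v\<rceil> \<le> fst x0 + int (flow_count g 0 (flow_point g 2 n))
        + (int (flow_count g 1 t) - int (flow_count g 1 (flow_point g 2 n)))"
      by (simp add: ceiling_le_iff \<sigma>_def)
  qed
  then show ?thesis
    by (simp add: v_def ceiling_le_iff[symmetric])
qed

lemma exists_reset_between:
  assumes "0 < t" "0 < \<eta>" "\<eta> \<le> 1" "2 * \<delta> < b * \<eta>"
  obtains n where "(1 - \<eta>) * t < flow_point g 2 n" "flow_point g 2 n \<le> t"
proof -
  have "b * t - \<delta> * t \<le> real (flow_count g 2 t)"
    "real (flow_count g 2 ((1 - \<eta>) * t)) \<le> b * ((1 - \<eta>) * t) + \<delta> * t"
    using count_close[of 2 t] count_close[of 2 "(1 - \<eta>) * t"] assms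
    by (simp_all add: flow_rate_def abs_le_iff mult_le_cancel_right1)
  moreover have "0 < (b * \<eta> - 2 * \<delta>) * t"
    using assms by simp
  ultimately have "flow_count g 2 ((1 - \<eta>) * t) < flow_count g 2 t"
    by (simp add: algebra_simps)
  moreover have "{n. flow_point g 2 n \<le> (1 - \<eta>) * t} \<subseteq> {n. flow_point g 2 n \<le> t}"
  proof
    fix n assume "n \<in> {n. flow_point g 2 n \<le> (1 - \<eta>) * t}"
    moreover have "(1 - \<eta>) * t \<le> t"
      using assms by (simp add: mult_le_cancel_right1)
    ultimately show "n \<in> {n. flow_point g 2 n \<le> t}"
      by simp
  qed
  then have "finite {n. flow_point g 2 n \<le> (1 - \<eta>) * t}"
    by (rule finite_subset) (simp add: finite_flows)
  ultimately have "\<not> {n. flow_point g 2 n \<le> t} \<subseteq> {n. flow_point g 2 n \<le> (1 - \<eta>) * t}"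
    using card_mono unfolding flow_count_def by (metis not_le)
  then show ?thesis
    using that by force
qed

lemma snd_cascade_state_upper:
  assumes "0 < t" "0 < \<eta>" "\<eta> \<le> 1" "2 * \<delta> < b * \<eta>"
  shows "snd (cascade_state x0 g t)
           \<le> min l1 l2 * t + (\<bar>real_of_int (fst x0)\<bar> + \<bar>real_of_int (snd x0)\<bar>) + (l2 * \<eta> + 3 * \<delta>) * t"
proof -
  have slack: "(l2 * \<eta> + 3 * \<delta>) * t = l2 * (\<eta> * t) + 3 * (\<delta> * t)" "0 \<le> \<delta> * t" "0 \<le> l2 * (\<eta> * t)"
    using count_close[of 0 0] assms l2 by (simp_all add: algebra_simps)
  have N1: "real (flow_count g 1 t) \<le> l2 * t + \<delta> * t"
    using count_close[of 1 t] assms by (simp add: flow_rate_def abs_le_iff)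
  have unreset: "snd (cascade_state x0 g t)
      \<le> l2 * t + (\<bar>real_of_int (fst x0)\<bar> + \<bar>real_of_int (snd x0)\<bar>) + (l2 * \<eta> + 3 * \<delta>) * t"
    using snd_cascade_state_le[OF simple finite_flows, of x0] N1 slack by linarith
  obtain n where n: "(1 - \<eta>) * t < flow_point g 2 n" "flow_point g 2 n \<le> t"
    using exists_reset_between[OF assms] .
  define \<sigma> where "\<sigma> = flow_point g 2 n"
  have \<sigma>: "0 \<le> \<sigma>" "\<sigma> \<le> t" "t - \<sigma> \<le> \<eta> * t"
    using flow_point_pos[OF simple, of 2 n] n by (simp_all add: \<sigma>_def algebra_simps)
  have "l1 * \<sigma> \<le> l1 * t" "l2 * (t - \<sigma>) \<le> l2 * (\<eta> * t)"
    using \<sigma> l1 l2 by (simp_all add: mult_left_mono)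
  moreover have "l2 * (t - \<sigma>) = l2 * t - l2 * \<sigma>"
    by (simp add: algebra_simps)
  moreover have "real (flow_count g 0 \<sigma>) \<le> l1 * \<sigma> + \<delta> * t" "l2 * \<sigma> - \<delta> * t \<le> real (flow_count g 1 \<sigma>)"
    using count_close[of 0 \<sigma>] count_close[of 1 \<sigma>] \<sigma> by (simp_all add: flow_rate_def abs_le_iff)
  moreover have "snd (cascade_state x0 g t) \<le> fst x0 + real (flow_count g 0 \<sigma>)
      + (real (flow_count g 1 t) - real (flow_count g 1 \<sigma>))"
    using snd_cascade_state_le_reset[OF simple finite_flows n(2), of x0] by (simp add: \<sigma>_def)
  ultimately have "snd (cascade_state x0 g t)
      \<le> l1 * t + (\<bar>real_of_int (fst x0)\<bar> + \<bar>real_of_int (snd x0)\<bar>) + (l2 * \<eta> + 3 * \<delta>) * t"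
    using N1 slack abs_ge_self[of "real_of_int (fst x0)"] by linarith
  with unreset show ?thesis
    by (cases "l1 \<le> l2") (simp_all add: min_def)
qed

lemma snd_cascade_state_close:
  assumes "0 < t" "0 < \<eta>" "\<eta> \<le> 1" "2 * \<delta> < b * \<eta>"
  shows "\<bar>real_of_int (snd (cascade_state x0 g t)) - min l1 l2 * t\<bar>
           \<le> \<bar>real_of_int (fst x0)\<bar> + \<bar>real_of_int (snd x0)\<bar> + (l2 * \<eta> + 3 * \<delta>) * t"
proof -
  have "0 \<le> l2 * \<eta> * t" "(l2 * \<eta> + 3 * \<delta>) * t = l2 * \<eta> * t + 3 * \<delta> * t"
    using assms l2 by (simp_all add: algebra_simps)
  then show ?thesis
    using snd_cascade_state_lower[of x0] snd_cascade_state_upper[OF assms, of x0] assms(1)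
    unfolding abs_le_iff by linarith
qed

end

section \<open>Arrival counts with high probability\<close>

lemma grid_interval:
  fixes J :: nat
  assumes "0 \<le> s" "s \<le> t" "0 < t" "0 < J"
  obtains j where "j < J" "real j / J * t \<le> s" "s \<le> real (Suc j) / J * t"
proof
  define x where "x = s * J / t"
  have x: "0 \<le> x" "x \<le> J"
    using assms by (simp_all add: x_def field_simps)
  define j where "j = nat (\<lceil>x\<rceil> - 1)"
  have "real j \<le> x" "x \<le> real (Suc j)"
    unfolding j_def using x by linarith+
  then show "real j / J * t \<le> s" "s \<le> real (Suc j) / J * t"
    using assms by (simp_all add: x_def field_simps)
  show "j < J"
    unfolding j_def using x assms(4) by linarith
qed

lemma uniform_approx_from_grid:
  fixes f :: "real \<Rightarrow> real" and J :: nat and c e :: real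
  assumes mono: "mono_on {0..t} f" and "0 < t" "0 < J" "0 \<le> c" "c * t \<le> J * e"
    and grid: "\<And>j. j \<le> J \<Longrightarrow> \<bar>f (real j / J * t) - c * (real j / J * t)\<bar> \<le> e"
    and s: "0 \<le> s" "s \<le> t"
  shows "\<bar>f s - c * s\<bar> \<le> 2 * e"
proof -
  obtain j where j: "j < J" "real j / J * t \<le> s" "s \<le> real (Suc j) / J * t"
    using grid_interval[OF s assms(2,3)] .
  have "real (Suc j) / J * t \<le> real J / J * t"
    using j(1) assms(2) by (intro divide_right_mono mult_right_mono) auto
  then have in_range: "0 \<le> real j / J * t" "real (Suc j) / J * t \<le> t"
    using assms(2,3) by simp_all
  have mesh: "c * (real (Suc j) / J * t) \<le> c * (real j / J * t) + e"
    using assms(3,5) by (simp add: field_simps)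
  have "f s \<le> f (real (Suc j) / J * t)" "f (real j / J * t) \<le> f s"
    using s j in_range by (auto intro!: mono_onD[OF mono])
  moreover have "c * (real j / J * t) \<le> c * s" "c * s \<le> c * (real (Suc j) / J * t)"
    using mult_left_mono[OF j(2) assms(4)] mult_left_mono[OF j(3) assms(4)] by simp_all
  moreover have "\<bar>f (real j / J * t) - c * (real j / J * t)\<bar> \<le> e"
    "\<bar>f (real (Suc j) / J * t) - c * (real (Suc j) / J * t)\<bar> \<le> e"
    using grid[of j] grid[of "Suc j"] j(1) by simp_all
  ultimately show ?thesis
    using mesh unfolding abs_le_iff by linarith
qed

lemma counts_close_if_grid:
  fixes J :: nat
  assumes "0 < t" "0 < J"
    and rate: "\<And>k. k < 3 \<Longrightarrow> 0 \<le> flow_rate l1 l2 b k \<and> flow_rate l1 l2 b k \<le> J * (\<delta> / 2)"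
    and grid: "\<And>k j. k < 3 \<Longrightarrow> j \<le> J \<Longrightarrow> finite {n. flow_point g k n \<le> real j / J * t}
      \<and> \<bar>real (flow_count g k (real j / J * t)) - flow_rate l1 l2 b k * (real j / J * t)\<bar> \<le> \<delta> / 2 * t"
  shows "counts_close l1 l2 b g t \<delta>"
  unfolding counts_close_def
proof (intro allI impI conjI ballI)
  fix k :: nat assume k: "k < 3"
  show finite: "finite {n. flow_point g k n \<le> t}"
    using grid[OF k, of J] assms(2) by simp
  have mono: "mono_on {0..t} (\<lambda>s. real (flow_count g k s))"
  proof (rule mono_onI)
    fix r s assume "r \<in> {0..t}" "s \<in> {0..t}" "r \<le> s"
    moreover have "finite {n. flow_point g k n \<le> s}"
      by (rule finite_subset[OF _ finite]) (use \<open>s \<in> {0..t}\<close> in auto)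
    ultimately show "real (flow_count g k r) \<le> real (flow_count g k s)"
      by (simp add: flow_count_mono)
  qed
  have mesh: "flow_rate l1 l2 b k * t \<le> J * (\<delta> / 2 * t)"
    using rate[OF k] assms(1) by (simp add: mult_right_mono)
  fix s assume "s \<in> {0..t}"
  then have "\<bar>real (flow_count g k s) - flow_rate l1 l2 b k * s\<bar> \<le> 2 * (\<delta> / 2 * t)"
    using grid[OF k] rate[OF k] by (intro uniform_approx_from_grid[OF mono assms(1,2) _ mesh]) auto
  then show "\<bar>real (flow_count g k s) - flow_rate l1 l2 b k * s\<bar> \<le> \<delta> * t"
    by simp
qed

lemma eventually_le_mult_at_top: "0 < e \<Longrightarrow> eventually (\<lambda>t::real. 0 < t \<and> a \<le> e * t) at_top"
  using eventually_gt_at_top[of "max 0 (a / e)"] by eventually_elim (auto simp: field_simps)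

lemma abs_divide_minus_le:
  fixes x c e t :: real
  assumes "0 < t" "\<bar>x - c * t\<bar> \<le> e * t"
  shows "\<bar>x / t - c\<bar> \<le> e"
proof -
  have "\<bar>x / t - c\<bar> = \<bar>x - c * t\<bar> / t"
    using assms(1) by (simp add: field_simps)
  then show ?thesis
    using assms by (simp add: divide_le_eq)
qed

text \<open>The outer probability of \<open>\<not> P (t, \<omega>)\<close> tends to \<open>0\<close> as \<open>t \<rightarrow> \<infinity>\<close>.  As a filter it lets
  such statements be combined by \<open>eventually_elim\<close>.\<close>
definition whp_at_top :: "'a measure \<Rightarrow> (real \<times> 'a) filter" where
  "whp_at_top M = Abs_filter (\<lambda>P. \<forall>\<epsilon>>0. eventually
     (\<lambda>t. \<exists>B\<in>sets M. {\<omega>\<in>space M. \<not> P (t, \<omega>)} \<subseteq> B \<and> measure M B \<le> \<epsilon>) at_top)"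

lemma eventually_whp_at_top:
  "eventually P (whp_at_top M) \<longleftrightarrow>
     (\<forall>\<epsilon>>0. eventually (\<lambda>t. \<exists>B\<in>sets M. {\<omega>\<in>space M. \<not> P (t, \<omega>)} \<subseteq> B \<and> measure M B \<le> \<epsilon>) at_top)"
  unfolding whp_at_top_def
proof (rule eventually_Abs_filter, rule is_filter.intro, goal_cases)
  case 1
  show ?case
    by (auto intro!: always_eventually bexI[of _ "{}"])
next
  case (2 P Q)
  show ?case
  proof (intro allI impI)
    fix \<epsilon> :: real assume "0 < \<epsilon>"
    then have "0 < \<epsilon> / 2" by simp
    with 2 have "eventually (\<lambda>t. \<exists>B\<in>sets M. {\<omega>\<in>space M. \<not> P (t, \<omega>)} \<subseteq> B \<and> measure M B \<le> \<epsilon> / 2) at_top"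
      "eventually (\<lambda>t. \<exists>B\<in>sets M. {\<omega>\<in>space M. \<not> Q (t, \<omega>)} \<subseteq> B \<and> measure M B \<le> \<epsilon> / 2) at_top"
      by blast+
    then show "eventually (\<lambda>t. \<exists>B\<in>sets M. {\<omega>\<in>space M. \<not> (P (t, \<omega>) \<and> Q (t, \<omega>))} \<subseteq> B
        \<and> measure M B \<le> \<epsilon>) at_top"
    proof eventually_elim
      case (elim t)
      then obtain B1 B2 where "B1 \<in> sets M" "{\<omega>\<in>space M. \<not> P (t, \<omega>)} \<subseteq> B1" "measure M B1 \<le> \<epsilon> / 2"
        "B2 \<in> sets M" "{\<omega>\<in>space M. \<not> Q (t, \<omega>)} \<subseteq> B2" "measure M B2 \<le> \<epsilon> / 2"
        by blast
      then show ?case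
        using measure_Un_le[of B1 M B2] by (intro bexI[of _ "B1 \<union> B2"]) auto
    qed
  qed
next
  case (3 P Q)
  show ?case
  proof (intro allI impI)
    fix \<epsilon> :: real assume "0 < \<epsilon>"
    with 3(2) have "eventually (\<lambda>t. \<exists>B\<in>sets M. {\<omega>\<in>space M. \<not> P (t, \<omega>)} \<subseteq> B \<and> measure M B \<le> \<epsilon>) at_top"
      by blast
    then show "eventually (\<lambda>t. \<exists>B\<in>sets M. {\<omega>\<in>space M. \<not> Q (t, \<omega>)} \<subseteq> B \<and> measure M B \<le> \<epsilon>) at_top"
      by (rule eventually_mono) (use 3(1) in blast)
  qed
qed

lemma eventually_whp_at_topI:
  assumes "eventually (\<lambda>t. B t \<in> sets M \<and> {\<omega>\<in>space M. \<not> P (t, \<omega>)} \<subseteq> B t \<and> measure M (B t) \<le> h t) at_top"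
    and "(h \<longlongrightarrow> 0) at_top"
  shows "eventually P (whp_at_top M)"
  unfolding eventually_whp_at_top
proof (intro allI impI)
  fix \<epsilon> :: real assume "0 < \<epsilon>"
  with assms(2) have "eventually (\<lambda>t. h t < \<epsilon>) at_top"
    by (rule order_tendstoD)
  with assms(1) show "eventually (\<lambda>t. \<exists>B\<in>sets M. {\<omega>\<in>space M. \<not> P (t, \<omega>)} \<subseteq> B \<and> measure M B \<le> \<epsilon>) at_top"
  proof eventually_elim
    case (elim t)
    then show ?case
      by (intro bexI[of _ "B t"]) auto
  qed
qed

lemma eventually_whp_at_top_at_top:
  "eventually Q at_top \<Longrightarrow> eventually (\<lambda>(t, \<omega>). Q t) (whp_at_top M)"
  by (rule eventually_whp_at_topI[where B = "\<lambda>_. {}" and h = "\<lambda>_. 0"]) (simp_all add: eventually_mono)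

lemma eventually_whp_at_top_AE:
  assumes "AE \<omega> in M. Q \<omega>"
  shows "eventually (\<lambda>(t, \<omega>). Q \<omega>) (whp_at_top M)"
proof -
  obtain N where N: "N \<in> null_sets M" "{\<omega>\<in>space M. \<not> Q \<omega>} \<subseteq> N"
    using assms by (auto simp: eventually_ae_filter)
  then show ?thesis
    by (intro eventually_whp_at_topI[where B = "\<lambda>_. N" and h = "\<lambda>_. 0"]) (auto simp: measure_def)
qed

lemma conv_in_prob_if_eventually_whp:
  assumes "\<And>\<epsilon>. 0 < \<epsilon> \<Longrightarrow> eventually (\<lambda>(t, \<omega>). \<bar>X t \<omega> - c\<bar> \<le> \<epsilon>) (whp_at_top M)"
  shows "conv_in_prob M X c"
  unfolding conv_in_prob_def
proof (intro allI impI tendstoI)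
  fix \<epsilon> r :: real assume "0 < \<epsilon>" "0 < r"
  moreover from \<open>0 < r\<close> have "0 < r / 2"
    by simp
  ultimately have "eventually (\<lambda>t. \<exists>B\<in>sets M. {\<omega>\<in>space M. \<not> \<bar>X t \<omega> - c\<bar> \<le> \<epsilon>} \<subseteq> B \<and> measure M B \<le> r / 2) at_top"
    using assms unfolding eventually_whp_at_top by fastforce
  then show "eventually (\<lambda>t. dist (outer_prob M {\<omega> \<in> space M. \<epsilon> < \<bar>X t \<omega> - c\<bar>}) 0 < r) at_top"
  proof (rule eventually_mono, elim bexE conjE)
    fix t B assume B: "B \<in> sets M" "{\<omega>\<in>space M. \<not> \<bar>X t \<omega> - c\<bar> \<le> \<epsilon>} \<subseteq> B" "measure M B \<le> r / 2"
    let ?S = "{B \<in> sets M. {\<omega> \<in> space M. \<epsilon> < \<bar>X t \<omega> - c\<bar>} \<inter> space M \<subseteq> B}"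
    have "outer_prob M {\<omega> \<in> space M. \<epsilon> < \<bar>X t \<omega> - c\<bar>} \<le> measure M B"
      unfolding outer_prob_def using B by (intro cINF_lower bdd_belowI[where m = 0]) auto
    moreover have "0 \<le> outer_prob M {\<omega> \<in> space M. \<epsilon> < \<bar>X t \<omega> - c\<bar>}"
      unfolding outer_prob_def by (rule cINF_greatest) auto
    ultimately show "dist (outer_prob M {\<omega> \<in> space M. \<epsilon> < \<bar>X t \<omega> - c\<bar>}) 0 < r"
      using B \<open>0 < r\<close> by simp
  qed
qed

lemma (in prob_space) prob_indep_var_eq_0:
  fixes X Y :: "'a \<Rightarrow> real"
  assumes indep: "indep_var borel X borel Y" and density: "distributed M lborel X f"
  shows "prob {\<omega>\<in>space M. X \<omega> = Y \<omega>} = 0"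
proof -
  have [measurable]: "X \<in> borel_measurable M" "Y \<in> borel_measurable M"
    using indep by (auto simp: indep_var_distribution_eq)
  let ?MX = "distr M borel X" and ?MY = "distr M borel Y"
  interpret MX: prob_space ?MX by (rule prob_space_distr) simp
  interpret MY: prob_space ?MY by (rule prob_space_distr) simp
  interpret XY: pair_prob_space ?MX ?MY ..
  define D where "D = {p :: real \<times> real. fst p = snd p}"
  have D_eq: "D = {p \<in> space (borel \<Otimes>\<^sub>M borel). fst p = snd p}"
    by (simp add: D_def space_pair_measure)
  have [measurable]: "D \<in> sets (borel \<Otimes>\<^sub>M borel)"
    unfolding D_eq by measurable
  have "(\<lambda>\<omega>. (X \<omega>, Y \<omega>)) -` D \<inter> space M = {\<omega>\<in>space M. X \<omega> = Y \<omega>}"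
    by (auto simp: D_def)
  then have "emeasure M {\<omega>\<in>space M. X \<omega> = Y \<omega>} = emeasure (distr M (borel \<Otimes>\<^sub>M borel) (\<lambda>\<omega>. (X \<omega>, Y \<omega>))) D"
    by (subst emeasure_distr) simp_all
  also have "distr M (borel \<Otimes>\<^sub>M borel) (\<lambda>\<omega>. (X \<omega>, Y \<omega>)) = ?MX \<Otimes>\<^sub>M ?MY"
    using indep by (simp add: indep_var_distribution_eq)
  also have "emeasure (?MX \<Otimes>\<^sub>M ?MY) D = (\<integral>\<^sup>+y. emeasure ?MX ((\<lambda>x. (x, y)) -` D) \<partial>?MY)"
    by (rule XY.emeasure_pair_measure_alt2) simp
  also have "\<dots> = (\<integral>\<^sup>+y. 0 \<partial>?MY)"
  proof (rule nn_integral_cong)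
    fix y
    have "?MX = distr M lborel X"
      by (rule distr_cong) auto
    also have "\<dots> = density lborel f"
      by (rule distributed_distr_eq_density[OF density])
    moreover have "emeasure (density lborel f) {y} = 0"
      using distributed_borel_measurable[OF density]
      by (subst emeasure_density) (auto intro!: nn_integral_null_set simp: null_sets_def)
    moreover have "(\<lambda>x. (x, y)) -` D = {y}"
      by (auto simp: D_def space_pair_measure)
    ultimately show "emeasure ?MX ((\<lambda>x. (x, y)) -` D) = 0"
      by simp
  qed
  finally show ?thesis
    by (simp add: measure_def)
qed

locale cascade_model = prob_space M for M :: "'a measure" +
  fixes G :: "nat \<Rightarrow> nat \<Rightarrow> 'a \<Rightarrow> real" and l1 l2 b :: real
  assumes l1: "0 < l1" and l2: "0 < l2" and b: "0 < b"
    and indep: "indep_vars (\<lambda>_. borel) (\<lambda>(k, n). G k n) ({..<3} \<times> UNIV)"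
    and exponential: "\<And>k n. k < 3 \<Longrightarrow>
           distributed M lborel (G k n) (\<lambda>s. ennreal (exponential_density (flow_rate l1 l2 b k) s))"
begin

abbreviation flows :: "'a \<Rightarrow> nat \<Rightarrow> nat \<Rightarrow> real" where
  "flows \<omega> \<equiv> \<lambda>k n. G k n \<omega>"

abbreviation rate :: "nat \<Rightarrow> real" where
  "rate \<equiv> flow_rate l1 l2 b"

lemma rate_pos: "0 < rate k"
  using l1 l2 b by (simp add: flow_rate_def)

lemma measurable_G [measurable]: "k < 3 \<Longrightarrow> G k n \<in> borel_measurable M"
  using distributed_measurable[OF exponential] by simp

lemma flow_point_eq_sum: "flow_point (flows \<omega>) k n = (\<Sum>i\<in>{k} \<times> {..n}. (\<lambda>(k, n). G k n) i \<omega>)"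
proof -
  have "{k} \<times> {..n} = Pair k ` {..n}"
    by auto
  then show ?thesis
    unfolding flow_point_def by (simp add: sum.reindex inj_on_def)
qed

lemma measurable_flow_point [measurable]:
  "k < 3 \<Longrightarrow> (\<lambda>\<omega>. flow_point (flows \<omega>) k n) \<in> borel_measurable M"
  unfolding flow_point_def by measurable

lemma erlang_flow_point:
  assumes "k < 3"
  shows "distributed M lborel (\<lambda>\<omega>. flow_point (flows \<omega>) k n) (erlang_density n (rate k))"
proof -
  have "distributed M lborel (\<lambda>\<omega>. \<Sum>i\<in>{k} \<times> {..n}. (\<lambda>(k, n). G k n) i \<omega>)
      (erlang_density (card ({k} \<times> {..n}) - 1) (rate k))"
    using assms exponential rate_pos
    by (intro exponential_distributed_sum indep_vars_subset[OF indep]) auto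
  then show ?thesis
    by (simp add: flow_point_eq_sum card_cartesian_product)
qed

lemma flow_point_deviation:
  assumes "k < 3" "0 < a"
  shows "prob {\<omega>\<in>space M. a \<le> \<bar>flow_point (flows \<omega>) k n - (n + 1) / rate k\<bar>} \<le> (n + 1) / (rate k)\<^sup>2 / a\<^sup>2"
proof -
  note erlang = erlang_flow_point[OF assms(1), of n]
  have "expectation (\<lambda>\<omega>. flow_point (flows \<omega>) k n) = (n + 1) / rate k"
    using erlang_ith_moment[OF rate_pos erlang, of 1] by (simp add: add.commute)
  moreover have "variance (\<lambda>\<omega>. flow_point (flows \<omega>) k n) = (n + 1) / (rate k)\<^sup>2"
    using erlang_distributed_variance[OF rate_pos erlang] by (simp add: add.commute)
  moreover have "prob {\<omega>\<in>space M. a \<le> \<bar>flow_point (flows \<omega>) k n - expectation (\<lambda>\<omega>. flow_point (flows \<omega>) k n)\<bar>}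
      \<le> variance (\<lambda>\<omega>. flow_point (flows \<omega>) k n) / a\<^sup>2"
    using erlang_ith_moment_integrable[OF rate_pos erlang, of 2] assms
    by (intro Chebyshev_inequality) auto
  ultimately show ?thesis
    by (simp add: add.commute)
qed

lemma indep_var_flow_points:
  assumes "k < 3" "k' < 3" "k \<noteq> k'"
  shows "indep_var borel (\<lambda>\<omega>. flow_point (flows \<omega>) k n) borel (\<lambda>\<omega>. flow_point (flows \<omega>) k' n')"
proof -
  have "indep_var
      borel ((\<lambda>f. \<Sum>i\<in>{k} \<times> {..n}. f i) \<circ> (\<lambda>\<omega>. restrict (\<lambda>i. (\<lambda>(k, n). G k n) i \<omega>) ({k} \<times> {..n})))
      borel ((\<lambda>f. \<Sum>i\<in>{k'} \<times> {..n'}. f i) \<circ> (\<lambda>\<omega>. restrict (\<lambda>i. (\<lambda>(k, n). G k n) i \<omega>) ({k'} \<times> {..n'})))"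
    using assms by (intro indep_var_compose[OF indep_var_restrict[OF indep]]) auto
  then show ?thesis
    by (simp add: comp_def flow_point_eq_sum cong: sum.cong)
qed

lemma AE_simple_flows: "AE \<omega> in M. simple_flows (flows \<omega>)"
proof -
  have "AE \<omega> in M. 0 < G k n \<omega>" if "k < 3" for k n
  proof -
    have "prob {\<omega>\<in>space M. G k n \<omega> \<le> 0} = 0"
      using exponential_distributedD_le[OF exponential[OF that] order_refl rate_pos] by simp
    then show ?thesis
      using that by (subst (asm) prob_eq_0) (auto simp: not_le)
  qed
  then have "AE \<omega> in M. \<forall>k<3. \<forall>n. 0 < G k n \<omega>"
    by (simp add: AE_all_countable)
  moreover have "AE \<omega> in M. flow_point (flows \<omega>) k n \<noteq> flow_point (flows \<omega>) k' n'"
    if "k < 3" "k' < 3" "k \<noteq> k'" for k k' n n'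
    using prob_indep_var_eq_0[OF indep_var_flow_points[OF that] erlang_flow_point[OF that(1)]] that
    by (subst (asm) prob_eq_0) auto
  then have "AE \<omega> in M. \<forall>k<3. \<forall>k'<3. \<forall>n n'. k \<noteq> k' \<longrightarrow> flow_point (flows \<omega>) k n \<noteq> flow_point (flows \<omega>) k' n'"
    by (simp add: AE_all_countable)
  ultimately show ?thesis
    by eventually_elim (simp add: simple_flows_def)
qed

lemma eventually_flow_point_close:
  assumes "k < 3" "0 < D" "0 \<le> A" "0 \<le> C"
    and "eventually (\<lambda>t. real (m t) + 1 \<le> A * t + C) at_top"
  shows "eventually (\<lambda>(t, \<omega>). \<bar>flow_point (flows \<omega>) k (m t) - (real (m t) + 1) / rate k\<bar> < D * t / rate k)
           (whp_at_top M)"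
proof (rule eventually_whp_at_topI)
  show "((\<lambda>t. (A + C) / (D\<^sup>2 * t)) \<longlongrightarrow> 0) at_top"
    using assms(2)
    by (intro tendsto_divide_0[OF tendsto_const] filterlim_at_top_imp_at_infinity
        filterlim_tendsto_pos_mult_at_top[OF tendsto_const _ filterlim_ident]) simp
  show "eventually (\<lambda>t. {\<omega>\<in>space M. D * t / rate k \<le> \<bar>flow_point (flows \<omega>) k (m t) - (real (m t) + 1) / rate k\<bar>}
      \<in> sets M \<and> {\<omega>\<in>space M. \<not> (case (t, \<omega>) of (t, \<omega>) \<Rightarrow>
          \<bar>flow_point (flows \<omega>) k (m t) - (real (m t) + 1) / rate k\<bar> < D * t / rate k)}
        \<subseteq> {\<omega>\<in>space M. D * t / rate k \<le> \<bar>flow_point (flows \<omega>) k (m t) - (real (m t) + 1) / rate k\<bar>}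
      \<and> measure M {\<omega>\<in>space M. D * t / rate k \<le> \<bar>flow_point (flows \<omega>) k (m t) - (real (m t) + 1) / rate k\<bar>}
        \<le> (A + C) / (D\<^sup>2 * t)) at_top"
    using assms(5) eventually_ge_at_top[of 1]
  proof eventually_elim
    case (elim t)
    have "0 < D * t / rate k"
      using assms(2) elim(2) rate_pos by simp
    then have "measure M {\<omega>\<in>space M. D * t / rate k \<le> \<bar>flow_point (flows \<omega>) k (m t) - (real (m t) + 1) / rate k\<bar>}
        \<le> (real (m t) + 1) / (rate k)\<^sup>2 / (D * t / rate k)\<^sup>2"
      using flow_point_deviation[OF assms(1), of _ "m t"] by (simp add: add.commute)
    also have "\<dots> = (real (m t) + 1) / (D\<^sup>2 * t\<^sup>2)"
      using rate_pos[of k] assms(2) elim(2) by (simp add: field_simps power2_eq_square)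
    also have "\<dots> \<le> (A * t + C * t) / (D\<^sup>2 * t\<^sup>2)"
      using elim assms(4) mult_left_mono[of 1 t C] by (intro divide_right_mono) auto
    also have "\<dots> = (A + C) / (D\<^sup>2 * t)"
      using elim(2) assms(2) by (simp add: field_simps power2_eq_square)
    finally show ?case
      using assms(1) by (auto simp: not_less)
  qed
qed

lemma eventually_flow_count_le:
  assumes "k < 3" "0 \<le> c" "0 < \<delta>"
  shows "eventually (\<lambda>(t, \<omega>). simple_flows (flows \<omega>) \<longrightarrow>
           finite {n. flow_point (flows \<omega>) k n \<le> c * t}
           \<and> real (flow_count (flows \<omega>) k (c * t)) \<le> (c * rate k + \<delta>) * t) (whp_at_top M)"
proof -
  define A where "A = c * rate k + \<delta>"
  have A: "0 \<le> A"
    using assms rate_pos[of k] by (simp add: A_def)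
  define m where "m t = nat \<lfloor>A * t\<rfloor>" for t
  have m_bound: "eventually (\<lambda>t. real (m t) + 1 \<le> A * t + 1) at_top"
    using eventually_ge_at_top[of 0] by eventually_elim (use A in \<open>simp add: m_def\<close>)
  have "eventually (\<lambda>(t, \<omega>). \<bar>flow_point (flows \<omega>) k (m t) - (real (m t) + 1) / rate k\<bar> < \<delta> * t / rate k)
      (whp_at_top M)"
    using eventually_flow_point_close[OF assms(1,3) A _ m_bound] by simp
  moreover have "eventually (\<lambda>(t, \<omega>). 0 \<le> t) (whp_at_top M)"
    by (intro eventually_whp_at_top_at_top eventually_ge_at_top)
  ultimately show ?thesis
  proof eventually_elim
    case (elim p)
    obtain t \<omega> where p: "p = (t, \<omega>)"
      by fastforce
    have "0 \<le> A * t"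
      using A elim p by simp
    then have "A * t < real (m t) + 1" "real (m t) \<le> A * t"
      by (simp_all add: m_def)
    then have "A * t / rate k < (real (m t) + 1) / rate k"
      using rate_pos[of k] by (simp add: divide_strict_right_mono)
    moreover have "A * t / rate k = c * t + \<delta> * t / rate k"
      using rate_pos[of k] by (simp add: A_def field_simps)
    ultimately have "c * t < flow_point (flows \<omega>) k (m t)"
      using elim p by (simp add: abs_less_iff)
    with \<open>real (m t) \<le> A * t\<close> show ?case
      using flow_count_le_if_less_flow_point[OF _ assms(1)] p by (force simp: A_def)
  qed
qed

lemma eventually_flow_count_ge:
  assumes "k < 3" "0 \<le> c" "0 < \<delta>"
  shows "eventually (\<lambda>(t, \<omega>). simple_flows (flows \<omega>) \<and> finite {n. flow_point (flows \<omega>) k n \<le> c * t} \<longrightarrow>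
           (c * rate k - \<delta>) * t \<le> real (flow_count (flows \<omega>) k (c * t))) (whp_at_top M)"
proof (cases "c * rate k \<le> \<delta>")
  case True
  have "eventually (\<lambda>(t, \<omega>). 0 \<le> t) (whp_at_top M)"
    by (intro eventually_whp_at_top_at_top eventually_ge_at_top)
  then show ?thesis
    by (rule eventually_mono) (use True in \<open>auto intro: order_trans[OF mult_nonpos_nonneg]\<close>)
next
  case False
  define A where "A = c * rate k - \<delta>"
  have A: "0 \<le> A"
    using False by (simp add: A_def)
  define m where "m t = nat \<lceil>A * t\<rceil>" for t
  have m_bound: "eventually (\<lambda>t. real (m t) + 1 \<le> A * t + 2) at_top"
    using eventually_ge_at_top[of 0] by eventually_elim (use A in \<open>simp add: m_def, linarith\<close>)
  have "eventually (\<lambda>(t, \<omega>). \<bar>flow_point (flows \<omega>) k (m t) - (real (m t) + 1) / rate k\<bar> < \<delta> / 2 * t / rate k)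
      (whp_at_top M)"
    using eventually_flow_point_close[OF assms(1) _ A _ m_bound, of "\<delta> / 2"] assms(3) by simp
  moreover have "eventually (\<lambda>(t, \<omega>). 4 / \<delta> \<le> t) (whp_at_top M)"
    by (intro eventually_whp_at_top_at_top eventually_ge_at_top)
  ultimately show ?thesis
  proof eventually_elim
    case (elim p)
    obtain t \<omega> where p: "p = (t, \<omega>)"
      by fastforce
    have "4 \<le> \<delta> * t"
      using elim p assms(3) by (simp add: field_simps)
    then have t: "0 \<le> t" "2 \<le> \<delta> / 2 * t"
      using assms(3) zero_le_mult_iff[of \<delta> t] by auto
    then have "real (m t) + 1 \<le> A * t + 2" "A * t \<le> real (m t)"
      using A by (simp_all add: m_def) linarith
    then have "(real (m t) + 1 + \<delta> / 2 * t) / rate k \<le> (A * t + 2 + \<delta> / 2 * t) / rate k"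
      using rate_pos[of k] by (intro divide_right_mono) auto
    also have "\<dots> \<le> (A * t + \<delta> * t) / rate k"
      using t rate_pos[of k] by (intro divide_right_mono) auto
    also have "\<dots> = c * t"
      using rate_pos[of k] by (simp add: A_def field_simps)
    finally have "flow_point (flows \<omega>) k (m t) \<le> c * t"
      using elim p by (simp add: abs_less_iff add_divide_distrib)
    then show ?case
      using flow_count_ge_if_flow_point_le[OF _ assms(1)] \<open>A * t \<le> real (m t)\<close> p
      by (force simp: A_def)
  qed
qed

lemma eventually_flow_count_close:
  assumes "k < 3" "0 \<le> c" "0 < \<delta>"
  shows "eventually (\<lambda>(t, \<omega>). simple_flows (flows \<omega>) \<longrightarrow> finite {n. flow_point (flows \<omega>) k n \<le> c * t}
           \<and> \<bar>real (flow_count (flows \<omega>) k (c * t)) - rate k * (c * t)\<bar> \<le> \<delta> * t) (whp_at_top M)"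
  using eventually_flow_count_le[OF assms] eventually_flow_count_ge[OF assms]
  by eventually_elim (auto simp: abs_le_iff algebra_simps)

lemma eventually_counts_close:
  assumes "0 < \<delta>"
  shows "eventually (\<lambda>(t, \<omega>). simple_flows (flows \<omega>) \<longrightarrow> counts_close l1 l2 b (flows \<omega>) t \<delta>) (whp_at_top M)"
proof -
  define J where "J = nat \<lceil>2 * (l1 + l2 + b) / \<delta>\<rceil> + 1"
  have "2 * (l1 + l2 + b) / \<delta> \<le> real J"
    unfolding J_def by linarith
  then have J: "0 < J" "rate k \<le> real J * (\<delta> / 2)" for k
    using assms l1 l2 b by (auto simp: J_def flow_rate_def field_simps)
  have "\<forall>k\<in>{..<3}. \<forall>j\<in>{..J}. eventually (\<lambda>(t, \<omega>). simple_flows (flows \<omega>) \<longrightarrow>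
      finite {n. flow_point (flows \<omega>) k n \<le> real j / J * t}
      \<and> \<bar>real (flow_count (flows \<omega>) k (real j / J * t)) - rate k * (real j / J * t)\<bar> \<le> \<delta> / 2 * t) (whp_at_top M)"
    by (intro ballI eventually_flow_count_close) (use assms in auto)
  then have "eventually (\<lambda>p. \<forall>k\<in>{..<3}. \<forall>j\<in>{..J}. case p of (t, \<omega>) \<Rightarrow> simple_flows (flows \<omega>) \<longrightarrow>
      finite {n. flow_point (flows \<omega>) k n \<le> real j / J * t}
      \<and> \<bar>real (flow_count (flows \<omega>) k (real j / J * t)) - rate k * (real j / J * t)\<bar> \<le> \<delta> / 2 * t) (whp_at_top M)"
    by (simp add: eventually_ball_finite_distrib)
  moreover have "eventually (\<lambda>(t, \<omega>). 0 < t) (whp_at_top M)"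
    by (intro eventually_whp_at_top_at_top eventually_gt_at_top)
  ultimately show ?thesis
  proof eventually_elim
    case (elim p)
    obtain t \<omega> where p: "p = (t, \<omega>)"
      by fastforce
    have "counts_close l1 l2 b (flows \<omega>) t \<delta>" if "simple_flows (flows \<omega>)"
      using elim that J rate_pos by (intro counts_close_if_grid[of t J]) (auto simp: p less_imp_le)
    then show ?case
      by (simp add: p)
  qed
qed

lemma conv_in_prob_fst_cascade_state:
  "conv_in_prob M (\<lambda>t \<omega>. real_of_int (fst (cascade_state x0 (flows \<omega>) t)) / t) l1"
proof (rule conv_in_prob_if_eventually_whp)
  fix \<epsilon> :: real assume "0 < \<epsilon>"
  have "eventually (\<lambda>(t, \<omega>). simple_flows (flows \<omega>)) (whp_at_top M)"
    by (rule eventually_whp_at_top_AE[OF AE_simple_flows])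
  moreover have "eventually (\<lambda>(t, \<omega>). simple_flows (flows \<omega>) \<longrightarrow> counts_close l1 l2 b (flows \<omega>) t (\<epsilon> / 2))
      (whp_at_top M)"
    using \<open>0 < \<epsilon>\<close> by (intro eventually_counts_close) simp
  moreover have "eventually (\<lambda>(t, \<omega>). 0 < t \<and> \<bar>real_of_int (fst x0)\<bar> \<le> \<epsilon> / 2 * t) (whp_at_top M)"
    using \<open>0 < \<epsilon>\<close> by (intro eventually_whp_at_top_at_top eventually_le_mult_at_top) simp
  ultimately show "eventually (\<lambda>(t, \<omega>). \<bar>real_of_int (fst (cascade_state x0 (flows \<omega>) t)) / t - l1\<bar> \<le> \<epsilon>)
      (whp_at_top M)"
  proof eventually_elim
    case (elim p)
    obtain t \<omega> where p: "p = (t, \<omega>)"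
      by fastforce
    then have "\<bar>real_of_int (fst (cascade_state x0 (flows \<omega>) t)) - l1 * t\<bar> \<le> \<epsilon> * t"
      using elim fst_cascade_state_close[OF l1 l2 b, of "flows \<omega>" t "\<epsilon> / 2" x0] by simp
    then show ?case
      using elim p by (simp add: abs_divide_minus_le)
  qed
qed

lemma conv_in_prob_snd_cascade_state:
  "conv_in_prob M (\<lambda>t \<omega>. real_of_int (snd (cascade_state x0 (flows \<omega>) t)) / t) (min l1 l2)"
proof (rule conv_in_prob_if_eventually_whp)
  fix \<epsilon> :: real assume "0 < \<epsilon>"
  define \<eta> where "\<eta> = min 1 (\<epsilon> / (4 * l2))"
  define \<delta> where "\<delta> = min (\<epsilon> / 8) (b * \<eta> / 4)"
  have "l2 * \<eta> \<le> l2 * (\<epsilon> / (4 * l2))"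
    using l2 by (intro mult_left_mono) (auto simp: \<eta>_def)
  then have \<eta>: "0 < \<eta>" "\<eta> \<le> 1" "l2 * \<eta> \<le> \<epsilon> / 4"
    using \<open>0 < \<epsilon>\<close> l2 by (simp_all add: \<eta>_def)
  have "\<delta> \<le> b * \<eta> / 4" "0 < b * \<eta>"
    using \<eta> b by (simp_all add: \<delta>_def)
  then have \<delta>: "0 < \<delta>" "2 * \<delta> < b * \<eta>" "\<delta> \<le> \<epsilon> / 8"
    using \<open>0 < \<epsilon>\<close> by (simp_all add: \<delta>_def)
  have "eventually (\<lambda>(t, \<omega>). simple_flows (flows \<omega>)) (whp_at_top M)"
    by (rule eventually_whp_at_top_AE[OF AE_simple_flows])
  moreover have "eventually (\<lambda>(t, \<omega>). simple_flows (flows \<omega>) \<longrightarrow> counts_close l1 l2 b (flows \<omega>) t \<delta>)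
      (whp_at_top M)"
    using \<delta> by (intro eventually_counts_close) simp
  moreover have "eventually (\<lambda>(t, \<omega>). 0 < t
      \<and> \<bar>real_of_int (fst x0)\<bar> + \<bar>real_of_int (snd x0)\<bar> \<le> \<epsilon> / 4 * t) (whp_at_top M)"
    using \<open>0 < \<epsilon>\<close> by (intro eventually_whp_at_top_at_top eventually_le_mult_at_top) simp
  ultimately show "eventually (\<lambda>(t, \<omega>). \<bar>real_of_int (snd (cascade_state x0 (flows \<omega>) t)) / t - min l1 l2\<bar> \<le> \<epsilon>)
      (whp_at_top M)"
  proof eventually_elim
    case (elim p)
    obtain t \<omega> where p: "p = (t, \<omega>)"
      by fastforce
    then have "0 < t"
      using elim by simp
    moreover have "(l2 * \<eta> + 3 * \<delta>) * t \<le> (\<epsilon> / 4 + 3 * (\<epsilon> / 8)) * t"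
      using \<eta>(3) \<delta>(3) \<open>0 < t\<close> by (intro mult_right_mono) auto
    ultimately have "\<bar>real_of_int (snd (cascade_state x0 (flows \<omega>) t)) - min l1 l2 * t\<bar> \<le> \<epsilon> * t"
      using elim p snd_cascade_state_close[OF l1 l2 b, of "flows \<omega>" t \<delta> \<eta> x0] \<eta>(1,2) \<delta>(2)
      by (simp add: algebra_simps)
    then show ?case
      using \<open>0 < t\<close> p by (simp add: abs_divide_minus_le)
  qed
qed

end

theorem theorem2:
  fixes M :: "'a measure"
    and G :: "nat \<Rightarrow> nat \<Rightarrow> 'a \<Rightarrow> real"
    and l1 l2 b :: real
    and x0 :: "int \<times> int"
  assumes "prob_space M"
    and "l1 > 0" and "l2 > 0" and "b > 0"
    and "prob_space.indep_vars M (\<lambda>_. borel) (\<lambda>(k, n). G k n) ({..<3} \<times> UNIV)"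
    and "\<And>k n. k < 3 \<Longrightarrow>
           distributed M lborel (G k n) (\<lambda>s. ennreal (exponential_density (flow_rate l1 l2 b k) s))"
  shows "(l1 < l2 \<longrightarrow>
            ergodic_chain (Y_kernel l1 l2 b)
          \<and> conv_in_prob M (\<lambda>t \<omega>. real_of_int (fst (cascade_state x0 (\<lambda>k n. G k n \<omega>) t)) / t) l1
          \<and> conv_in_prob M (\<lambda>t \<omega>. real_of_int (snd (cascade_state x0 (\<lambda>k n. G k n \<omega>) t)) / t) l1)
       \<and> (l1 > l2 \<longrightarrow>
            transient_chain (Y_kernel l1 l2 b)
          \<and> conv_in_prob M (\<lambda>t \<omega>. real_of_int (fst (cascade_state x0 (\<lambda>k n. G k n \<omega>) t)) / t) l1
          \<and> conv_in_prob M (\<lambda>t \<omega>. real_of_int (snd (cascade_state x0 (\<lambda>k n. G k n \<omega>) t)) / t) l2)"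
proof -
  interpret cascade_model M G l1 l2 b
    using assms by (simp add: cascade_model_def cascade_model_axioms_def)
  have "l1 < l2 \<Longrightarrow> min l1 l2 = l1" "l2 < l1 \<Longrightarrow> min l1 l2 = l2"
    by simp_all
  then show ?thesis
    using ergodic_Y_kernel[OF l1 l2 b] transient_chain_Y_kernel[OF l1 l2 b]
      conv_in_prob_fst_cascade_state[of x0] conv_in_prob_snd_cascade_state[of x0]
    by auto
qed

end
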